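(* The set $\mathcal{S}$ of all signatures of continuous bounded variation paths is a linearly independent subset of $T((V))$; that is, any finitely many pairwise distinct elements of $\mathcal{S}$ are linearly independent.
   Context: $V$ is a finite-dimensional real vector space and $T((V))=\prod_{k\ge0}V^{\otimes k}$ is the space of formal tensor series. For a continuous bounded variation path $\gamma$ and $s<t$, $S(\gamma)_{s,t}=1+\sum_{k\ge1}\int_{s<u_1<\dots<u_k<t}d\gamma_{u_1}\otimes\cdots\otimes d\gamma_{u_k}\in T((V))$, and $\mathcal{S}=\{S(\gamma)_{s,t}:\gamma\text{ continuous of bounded variation},\ s<t\}$. *)

theory Defs
  imports "HOL-Analysis.Analysis"
begin

definition is_partition :: "real list \<Rightarrow> real \<Rightarrow> real \<Rightarrow> bool" where
  "is_partition xs a b \<longleftrightarrow> length xs \<ge> 2 \<and> sorted_wrt (<) xs \<and> hd xs = a \<and> last xs = b"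

definition mesh :: "real list \<Rightarrow> real" where
  "mesh xs = Max (insert 0 {xs ! Suc i - xs ! i | i. Suc i < length xs})"

definition bounded_variation_on :: "(real \<Rightarrow> 'v::real_normed_vector) \<Rightarrow> real \<Rightarrow> real \<Rightarrow> bool" where
  "bounded_variation_on \<gamma> a b \<longleftrightarrow>
     (\<exists>B. \<forall>xs. is_partition xs a b \<longrightarrow>
        (\<Sum>i<length xs - 1. norm (\<gamma> (xs ! Suc i) - \<gamma> (xs ! i))) \<le> B)"

definition is_tagged_partition :: "real list \<Rightarrow> real list \<Rightarrow> real \<Rightarrow> real \<Rightarrow> bool" where
  "is_tagged_partition xs ts a b \<longleftrightarrow> is_partition xs a b \<and> length ts = length xs - 1 \<and>
     (\<forall>i < length ts. xs ! i \<le> ts ! i \<and> ts ! i \<le> xs ! Suc i)"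

definition rs_sum :: "(real \<Rightarrow> real) \<Rightarrow> (real \<Rightarrow> real) \<Rightarrow> real list \<Rightarrow> real list \<Rightarrow> real" where
  "rs_sum f g xs ts = (\<Sum>i<length ts. f (ts ! i) * (g (xs ! Suc i) - g (xs ! i)))"

definition has_rs_integral :: "(real \<Rightarrow> real) \<Rightarrow> (real \<Rightarrow> real) \<Rightarrow> real \<Rightarrow> real \<Rightarrow> real \<Rightarrow> bool" where
  "has_rs_integral f g a b I \<longleftrightarrow>
     (\<forall>\<epsilon>>0. \<exists>\<delta>>0. \<forall>xs ts. is_tagged_partition xs ts a b \<and> mesh xs < \<delta> \<longrightarrow>
        \<bar>rs_sum f g xs ts - I\<bar> < \<epsilon>)"

definition rs_integral :: "(real \<Rightarrow> real) \<Rightarrow> (real \<Rightarrow> real) \<Rightarrow> real \<Rightarrow> real \<Rightarrow> real" where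
  "rs_integral f g a b = (if a < b then (THE I. has_rs_integral f g a b I) else 0)"

text \<open>Iterated integrals, word given in reversed order:
  iter_int g s (e # w) t = integral over [s,t] of iter_int g s w u  d(g u \<bullet> e).\<close>
primrec iter_int :: "(real \<Rightarrow> 'v::euclidean_space) \<Rightarrow> real \<Rightarrow> 'v list \<Rightarrow> real \<Rightarrow> real" where
  "iter_int \<gamma> s [] t = 1"
| "iter_int \<gamma> s (e # w) t = rs_integral (\<lambda>u. iter_int \<gamma> s w u) (\<lambda>u. \<gamma> u \<bullet> e) s t"

text \<open>An element of T((V)) is represented by its coordinates w.r.t. the basis
  e_{i1} \<otimes> ... \<otimes> e_{ik}, indexed by words over Basis (other words get 0).
  The signature coordinate of word [e1,...,ek] is
  the integral over s<u1<...<uk<t of d\<gamma>^{e1}_{u1} ... d\<gamma>^{ek}_{uk}.\<close>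
definition signature :: "(real \<Rightarrow> 'v::euclidean_space) \<Rightarrow> real \<Rightarrow> real \<Rightarrow> ('v list \<Rightarrow> real)" where
  "signature \<gamma> s t = (\<lambda>w. if w \<in> lists Basis then iter_int \<gamma> s (rev w) t else 0)"

definition signatures :: "('v::euclidean_space list \<Rightarrow> real) set" where
  "signatures = {signature \<gamma> s t | \<gamma> s t. s < t \<and> continuous_on {s..t} \<gamma> \<and> bounded_variation_on \<gamma> s t}"

end

theory Submission
  imports Defs
begin

text \<open>Every signature is a character of the shuffle algebra: its coordinates multiply as
  \<open>S(\<gamma>)\<^sup>u S(\<gamma>)\<^sup>v = \<Sum>\<^sub>w S(\<gamma>)\<^sup>w\<close>, with \<open>w\<close> running over the shuffles of the words \<open>u\<close> and
  \<open>v\<close> counted with multiplicity. By induction on the words this reduces to the product rule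
  (integration by parts) for Riemann--Stieltjes integrals of continuous functions against
  continuous integrators of bounded variation. Distinct characters are linearly independent by
  Dedekind's argument: in a shortest nontrivial linear relation, pick a coordinate \<open>w\<close> at
  which two of the characters differ; multiplying the relation by the characters' values at \<open>w\<close>
  and subtracting a multiple of the original relation gives a shorter nontrivial one.\<close>

lemma successively_conjI:
  "successively P xs \<Longrightarrow> successively Q xs \<Longrightarrow> successively (\<lambda>x y. P x y \<and> Q x y) xs"
  by (induction xs rule: induct_list012) auto

fun adj_sum :: "('a \<Rightarrow> 'a \<Rightarrow> 'b::comm_monoid_add) \<Rightarrow> 'a list \<Rightarrow> 'b" where
  "adj_sum F (x # y # zs) = F x y + adj_sum F (y # zs)"
| "adj_sum F _ = 0"

lemma sum_nth_eq_adj_sum: "(\<Sum>i<length xs - 1. F (xs ! i) (xs ! Suc i)) = adj_sum F xs"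
proof (induction F xs rule: adj_sum.induct)
  case (1 F x y zs)
  have "(\<Sum>i<length (x # y # zs) - 1. F ((x # y # zs) ! i) ((x # y # zs) ! Suc i))
      = F x y + (\<Sum>i<length (y # zs) - 1. F ((y # zs) ! i) ((y # zs) ! Suc i))"
    by (simp add: sum.lessThan_Suc_shift del: sum.lessThan_Suc)
  with 1 show ?case by simp
qed auto

lemma adj_sum_append: "adj_sum F (xs @ c # ys) = adj_sum F (xs @ [c]) + adj_sum F (c # ys)"
  by (induction xs rule: induct_list012) (auto simp: add.assoc)

lemma adj_sum_add: "adj_sum (\<lambda>x y. F x y + G x y) xs = adj_sum F xs + adj_sum G xs"
  by (induction xs rule: induct_list012) (auto simp: algebra_simps)

lemma adj_sum_diff:
  "adj_sum (\<lambda>x y. F x y - G x y) xs = adj_sum F xs - (adj_sum G xs :: 'b::ab_group_add)"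
  by (induction xs rule: induct_list012) auto

lemma adj_sum_mult_left:
  "adj_sum (\<lambda>x y. c * F x y) xs = c * (adj_sum F xs :: 'b::semiring_0)"
  by (induction xs rule: induct_list012) (auto simp: distrib_left)

lemma adj_sum_telescope:
  "xs \<noteq> [] \<Longrightarrow> adj_sum (\<lambda>x y. h y - h x) xs = h (last xs) - (h (hd xs) :: 'b::ab_group_add)"
  by (induction xs rule: induct_list012) auto

lemma abs_adj_sum_le:
  "successively (\<lambda>x y. \<bar>F x y\<bar> \<le> G x y) xs \<Longrightarrow>
    \<bar>adj_sum F xs\<bar> \<le> (adj_sum G xs :: 'b::ordered_ab_group_add_abs)"
  by (induction xs rule: induct_list012) (auto intro: order_trans[OF abs_triangle_ineq] add_mono)

fun tagged_sum :: "(real \<Rightarrow> real) \<Rightarrow> (real \<Rightarrow> real) \<Rightarrow> real list \<Rightarrow> real list \<Rightarrow> real" where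
  "tagged_sum f g (x # y # zs) (t # ts) = f t * (g y - g x) + tagged_sum f g (y # zs) ts"
| "tagged_sum f g _ _ = 0"

fun is_tagging :: "real list \<Rightarrow> real list \<Rightarrow> bool" where
  "is_tagging (x # y # zs) (t # ts) \<longleftrightarrow> x \<le> t \<and> t \<le> y \<and> is_tagging (y # zs) ts"
| "is_tagging [x] [] \<longleftrightarrow> True"
| "is_tagging _ _ \<longleftrightarrow> False"

lemma is_tagging_iff_nth:
  "xs \<noteq> [] \<Longrightarrow> is_tagging xs ts \<longleftrightarrow> length ts = length xs - 1 \<and>
     (\<forall>i < length ts. xs ! i \<le> ts ! i \<and> ts ! i \<le> xs ! Suc i)"
proof (induction xs ts rule: is_tagging.induct)
  case (1 x y zs t ts)
  then show ?case by (auto simp: less_Suc_eq_0_disj)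
qed auto

lemma is_tagged_partition_iff:
  "is_tagged_partition xs ts a b \<longleftrightarrow> is_partition xs a b \<and> is_tagging xs ts"
  using is_tagging_iff_nth[of xs ts]
  by (cases "xs = []") (auto simp: is_tagged_partition_def is_partition_def)

lemma is_tagging_length: "is_tagging xs ts \<Longrightarrow> length ts = length xs - 1"
  by (induction xs ts rule: is_tagging.induct) auto

lemma rs_sum_eq_tagged_sum: "is_tagging xs ts \<Longrightarrow> rs_sum f g xs ts = tagged_sum f g xs ts"
proof (induction xs ts rule: is_tagging.induct)
  case (1 x y zs t ts)
  have "rs_sum f g (x # y # zs) (t # ts) = f t * (g y - g x) + rs_sum f g (y # zs) ts"
    unfolding rs_sum_def by (simp add: sum.lessThan_Suc_shift del: sum.lessThan_Suc)
  with 1 show ?case by simp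
qed (auto simp: rs_sum_def)

lemma is_tagging_append:
  "is_tagging (xs @ [c]) ts1 \<Longrightarrow> is_tagging (c # ys) ts2 \<Longrightarrow> is_tagging (xs @ c # ys) (ts1 @ ts2)"
proof (induction xs arbitrary: ts1 rule: induct_list012)
  case (2 x)
  then show ?case by (cases ts1; cases "tl ts1") auto
next
  case (3 x y zs)
  then show ?case by (cases ts1) auto
next
  case 1
  then show ?case by (cases ts1) auto
qed

lemma tagged_sum_append:
  "length ts1 = length xs \<Longrightarrow>
   tagged_sum f g (xs @ c # ys) (ts1 @ ts2) =
     tagged_sum f g (xs @ [c]) ts1 + tagged_sum f g (c # ys) ts2"
proof (induction xs arbitrary: ts1 rule: induct_list012)
  case (2 x)
  then show ?case by (cases ts1) auto
next
  case (3 x y zs)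
  then show ?case by (cases ts1) auto
qed simp

lemma is_tagging_butlast: "successively (\<le>) xs \<Longrightarrow> xs \<noteq> [] \<Longrightarrow> is_tagging xs (butlast xs)"
  by (induction xs rule: induct_list012) auto

lemma tagged_sum_butlast: "tagged_sum f g xs (butlast xs) = adj_sum (\<lambda>x y. f x * (g y - g x)) xs"
  by (induction xs rule: induct_list012) auto

lemma tagged_sum_cong:
  "(\<And>t. t \<in> set ts \<Longrightarrow> f t = f' t) \<Longrightarrow> tagged_sum f g xs ts = tagged_sum f' g xs ts"
  by (induction f g xs ts rule: tagged_sum.induct) auto

lemma tagged_sum_add:
  "tagged_sum (\<lambda>u. f u + h u) g xs ts = tagged_sum f g xs ts + tagged_sum h g xs ts"
  by (induction f g xs ts rule: tagged_sum.induct) (auto simp: algebra_simps)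

lemma tagged_sum_zero [simp]: "tagged_sum (\<lambda>u. 0) g xs ts = 0"
  by (induction "\<lambda>u::real. 0::real" g xs ts rule: tagged_sum.induct) auto

lemma tagged_sum_diff_const:
  "is_tagging xs ts \<Longrightarrow>
    tagged_sum (\<lambda>u. f u - c) g xs ts = tagged_sum f g xs ts - c * (g (last xs) - g (hd xs))"
  by (induction xs ts rule: is_tagging.induct) (auto simp: algebra_simps)

lemma is_tagging_tag_between:
  "is_tagging xs ts \<Longrightarrow> t \<in> set ts \<Longrightarrow> \<exists>x\<in>set xs. \<exists>y\<in>set xs. x \<le> t \<and> t \<le> y"
  by (induction xs ts rule: is_tagging.induct) auto

lemma is_partition_iff_successively:
  "is_partition xs a b \<longleftrightarrow> length xs \<ge> 2 \<and> successively (<) xs \<and> hd xs = a \<and> last xs = b"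
  unfolding is_partition_def by (simp add: successively_conv_sorted_wrt)

lemma is_partition_two [simp]: "is_partition [x, y] a b \<longleftrightarrow> x = a \<and> y = b \<and> a < b"
  by (auto simp: is_partition_def)

lemma is_partition_Cons_Cons:
  "is_partition (x # y # zs) a b \<longleftrightarrow>
     x = a \<and> x < y \<and> (if zs = [] then y = b else is_partition (y # zs) y b)"
  unfolding is_partition_iff_successively by (cases zs) auto

lemma is_partitionE:
  assumes "is_partition xs a b"
  obtains y zs where "xs = a # y # zs"
  using assms unfolding is_partition_def by (cases xs; cases "tl xs") auto

lemma is_partition_snocE:
  assumes "is_partition xs a b"
  obtains ys where "xs = ys @ [b]"
  using assms unfolding is_partition_def
  by (metis append_butlast_last_id list.size(3) not_numeral_le_zero)

lemma is_partition_bounds: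
  assumes "is_partition xs a b"
  shows "a < b" and "set xs \<subseteq> {a..b}" and "successively (\<lambda>x y. a \<le> x \<and> x < y \<and> y \<le> b) xs"
proof -
  have sorted: "sorted_wrt (<) xs" and ends: "xs \<noteq> []" "hd xs = a" "last xs = b"
    using assms by (auto simp: is_partition_def)
  then obtain ys where ys: "xs = ys @ [b]" by (metis append_butlast_last_id)
  obtain y zs where xs: "xs = a # y # zs" using assms by (rule is_partitionE)
  have "x \<le> b" if "x \<in> set xs" for x
    using sorted that unfolding ys by (auto simp: sorted_wrt_append)
  moreover have "a \<le> x" if "x \<in> set xs" for x
    using sorted that unfolding xs by auto
  ultimately show "set xs \<subseteq> {a..b}" by auto
  have "b \<in> set (y # zs)" using ends unfolding xs by (metis last.simps last_in_set list.distinct(1))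
  with sorted show "a < b" unfolding xs by auto
  show "successively (\<lambda>x y. a \<le> x \<and> x < y \<and> y \<le> b) xs"
    by (rule successively_mono[OF successively_if_sorted_wrt[OF sorted]])
      (use \<open>set xs \<subseteq> {a..b}\<close> in auto)
qed

lemma is_partition_append:
  assumes "is_partition (xs @ [c]) a c" "is_partition (c # ys) c b"
  shows "is_partition (xs @ c # ys) a b"
proof -
  have "xs @ c # ys = (xs @ [c]) @ ys" by simp
  with assms show ?thesis
    unfolding is_partition_iff_successively
    by (cases ys) (auto simp: successively_append_iff hd_append)
qed

lemma is_partition_split:
  assumes "is_partition (xs @ c # ys) a b"
  shows "a < c \<Longrightarrow> is_partition (xs @ [c]) a c"
    and "c < b \<Longrightarrow> is_partition (c # ys) c b"
    and "c = b \<Longrightarrow> ys = []"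
proof -
  have s: "sorted_wrt (<) (xs @ c # ys)" "hd (xs @ c # ys) = a" "last (xs @ c # ys) = b"
    using assms by (auto simp: is_partition_def)
  show "a < c \<Longrightarrow> is_partition (xs @ [c]) a c"
    using s by (cases xs) (auto simp: is_partition_def sorted_wrt_append)
  show "c < b \<Longrightarrow> is_partition (c # ys) c b"
    using s by (cases ys rule: rev_cases) (auto simp: is_partition_def sorted_wrt_append)
  show "c = b \<Longrightarrow> ys = []"
    using s by (cases ys rule: rev_cases) (auto simp: sorted_wrt_append)
qed

lemma mesh_less_iff:
  assumes "\<delta> > 0"
  shows "mesh xs < \<delta> \<longleftrightarrow> successively (\<lambda>x y. y - x < \<delta>) xs"
proof -
  have "{xs ! Suc i - xs ! i | i. Suc i < length xs} \<subseteq> (\<lambda>i. xs ! Suc i - xs ! i) ` {..<length xs}"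
    by auto
  then have "finite {xs ! Suc i - xs ! i | i. Suc i < length xs}"
    by (rule finite_subset) simp
  with assms show ?thesis
    unfolding mesh_def successively_conv_nth by (auto simp: Max_less_iff)
qed

lemma exists_fine_partition:
  assumes "\<delta> > 0" "a < b"
  shows "\<exists>xs. is_partition xs a b \<and> successively (\<lambda>x y. y - x < \<delta>) xs"
proof -
  have "\<forall>a. a < b \<and> b - a \<le> real n * (\<delta> / 2) \<longrightarrow>
     (\<exists>xs. is_partition xs a b \<and> successively (\<lambda>x y. y - x < \<delta>) xs)" for n
  proof (induction n)
    case (Suc n)
    show ?case
    proof (intro allI impI)
      fix a assume a: "a < b \<and> b - a \<le> real (Suc n) * (\<delta> / 2)"
      show "\<exists>xs. is_partition xs a b \<and> successively (\<lambda>x y. y - x < \<delta>) xs"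
      proof (cases "b - a < \<delta>")
        case True
        with a show ?thesis by (intro exI[of _ "[a, b]"]) simp
      next
        case False
        with a assms obtain ys
          where ys: "is_partition ys (a + \<delta> / 2) b" "successively (\<lambda>x y. y - x < \<delta>) ys"
          using Suc.IH[rule_format, of "a + \<delta> / 2"] by (auto simp: algebra_simps)
        then obtain y zs where "ys = (a + \<delta> / 2) # y # zs" by (blast elim: is_partitionE)
        with ys assms show ?thesis
          by (intro exI[of _ "a # ys"])
            (auto simp: is_partition_Cons_Cons is_partition_iff_successively)
      qed
    qed
  qed auto
  moreover obtain n where "(b - a) / (\<delta> / 2) \<le> real n" using real_arch_simple by blast
  ultimately show ?thesis using assms by (auto simp: field_simps)
qed

lemma is_partition_tags_bounds:
  assumes "is_partition xs a b" "is_tagging xs ts"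
  shows "set ts \<subseteq> {a..b}"
  using is_tagging_tag_between[OF assms(2)] is_partition_bounds(2)[OF assms(1)] by force

section \<open>Riemann--Stieltjes integrals\<close>

definition fine_tagged_partition :: "real \<Rightarrow> real list \<Rightarrow> real list \<Rightarrow> real \<Rightarrow> real \<Rightarrow> bool" where
  "fine_tagged_partition \<delta> xs ts a b \<longleftrightarrow>
     is_partition xs a b \<and> is_tagging xs ts \<and> successively (\<lambda>x y. y - x < \<delta>) xs"

lemma fine_tagged_partition_mono:
  "fine_tagged_partition \<delta> xs ts a b \<Longrightarrow> \<delta> \<le> \<delta>' \<Longrightarrow> fine_tagged_partition \<delta>' xs ts a b"
  unfolding fine_tagged_partition_def by (auto elim: successively_mono)

lemma fine_tagged_partition_butlast:
  assumes "is_partition xs a b" "successively (\<lambda>x y. y - x < \<delta>) xs"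
  shows "fine_tagged_partition \<delta> xs (butlast xs) a b"
proof -
  have "is_tagging xs (butlast xs)"
    using assms(1) by (intro is_tagging_butlast)
      (auto simp: is_partition_iff_successively elim: successively_mono)
  with assms show ?thesis unfolding fine_tagged_partition_def by blast
qed

lemma exists_fine_tagged_partition:
  assumes "\<delta> > 0" "a < b"
  shows "\<exists>xs ts. fine_tagged_partition \<delta> xs ts a b"
  using exists_fine_partition[OF assms] fine_tagged_partition_butlast by blast

lemma fine_tagged_partition_append:
  assumes "fine_tagged_partition \<delta> xs1 ts1 a c" "fine_tagged_partition \<delta> xs2 ts2 c b"
  shows "\<exists>xs ts. fine_tagged_partition \<delta> xs ts a b \<and>
    tagged_sum f g xs ts = tagged_sum f g xs1 ts1 + tagged_sum f g xs2 ts2"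
proof -
  obtain ys1 where ys1: "xs1 = ys1 @ [c]"
    using assms(1) unfolding fine_tagged_partition_def by (blast elim: is_partition_snocE)
  obtain ys2 where ys2: "xs2 = c # ys2"
    using assms(2) unfolding fine_tagged_partition_def by (metis is_partitionE)
  have "fine_tagged_partition \<delta> (ys1 @ c # ys2) (ts1 @ ts2) a b"
    using assms is_partition_append[of ys1 c a ys2 b] is_tagging_append[of ys1 c ts1 ys2 ts2]
    unfolding fine_tagged_partition_def ys1 ys2 by (auto simp: successively_append_iff)
  moreover have "tagged_sum f g (ys1 @ c # ys2) (ts1 @ ts2) =
      tagged_sum f g xs1 ts1 + tagged_sum f g xs2 ts2"
    using assms(1) is_tagging_length[of xs1 ts1] tagged_sum_append[of ts1 ys1]
    unfolding fine_tagged_partition_def ys1 ys2 by simp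
  ultimately show ?thesis by blast
qed

lemma has_rs_integral_iff:
  "has_rs_integral f g a b I \<longleftrightarrow>
     (\<forall>\<epsilon>>0. \<exists>\<delta>>0. \<forall>xs ts. fine_tagged_partition \<delta> xs ts a b \<longrightarrow> \<bar>tagged_sum f g xs ts - I\<bar> < \<epsilon>)"
proof -
  have *: "(\<forall>xs ts. is_tagged_partition xs ts a b \<and> mesh xs < \<delta> \<longrightarrow> \<bar>rs_sum f g xs ts - I\<bar> < \<epsilon>) \<longleftrightarrow>
      (\<forall>xs ts. fine_tagged_partition \<delta> xs ts a b \<longrightarrow> \<bar>tagged_sum f g xs ts - I\<bar> < \<epsilon>)"
    if "\<delta> > 0" for \<delta> \<epsilon>
    using that by (auto simp: is_tagged_partition_iff mesh_less_iff fine_tagged_partition_def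
        rs_sum_eq_tagged_sum)
  show ?thesis unfolding has_rs_integral_def by (metis *)
qed

lemma has_rs_integralE:
  assumes "has_rs_integral f g a b I" "\<epsilon> > 0"
  obtains \<delta> where "\<delta> > 0"
    "\<And>xs ts. fine_tagged_partition \<delta> xs ts a b \<Longrightarrow> \<bar>tagged_sum f g xs ts - I\<bar> < \<epsilon>"
  using assms unfolding has_rs_integral_iff by blast

lemma has_rs_integral_unique:
  assumes "a < b" "has_rs_integral f g a b I" "has_rs_integral f g a b J"
  shows "I = J"
proof (rule ccontr)
  assume "I \<noteq> J"
  then have e: "\<bar>I - J\<bar> / 2 > 0" by simp
  obtain \<delta>1 where \<delta>1: "\<delta>1 > 0"
    "\<And>xs ts. fine_tagged_partition \<delta>1 xs ts a b \<Longrightarrow> \<bar>tagged_sum f g xs ts - I\<bar> < \<bar>I - J\<bar> / 2"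
    using has_rs_integralE[OF assms(2) e] by metis
  obtain \<delta>2 where \<delta>2: "\<delta>2 > 0"
    "\<And>xs ts. fine_tagged_partition \<delta>2 xs ts a b \<Longrightarrow> \<bar>tagged_sum f g xs ts - J\<bar> < \<bar>I - J\<bar> / 2"
    using has_rs_integralE[OF assms(3) e] by metis
  obtain xs ts where P: "fine_tagged_partition (min \<delta>1 \<delta>2) xs ts a b"
    using exists_fine_tagged_partition[of "min \<delta>1 \<delta>2"] \<delta>1(1) \<delta>2(1) assms(1) by fastforce
  have "\<bar>tagged_sum f g xs ts - I\<bar> < \<bar>I - J\<bar> / 2" "\<bar>tagged_sum f g xs ts - J\<bar> < \<bar>I - J\<bar> / 2"
    using \<delta>1(2) \<delta>2(2) fine_tagged_partition_mono[OF P] by auto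
  then show False
    using abs_triangle_ineq[of "I - tagged_sum f g xs ts" "tagged_sum f g xs ts - J"]
    by (simp add: abs_minus_commute)
qed

lemma rs_integral_eqI: "a < b \<Longrightarrow> has_rs_integral f g a b I \<Longrightarrow> rs_integral f g a b = I"
  unfolding rs_integral_def using has_rs_integral_unique by (auto intro!: the_equality)

lemma has_rs_integral_cong:
  assumes "\<And>u. u \<in> {a..b} \<Longrightarrow> f u = f' u"
  shows "has_rs_integral f g a b I \<longleftrightarrow> has_rs_integral f' g a b I"
proof -
  have "tagged_sum f g xs ts = tagged_sum f' g xs ts"
    if "fine_tagged_partition \<delta> xs ts a b" for \<delta> xs ts
    using that assms is_partition_tags_bounds[of xs a b ts]
    by (intro tagged_sum_cong) (auto simp: fine_tagged_partition_def)
  then show ?thesis unfolding has_rs_integral_iff by metis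
qed

lemma rs_integral_cong:
  "(\<And>u. u \<in> {a..b} \<Longrightarrow> f u = f' u) \<Longrightarrow> rs_integral f g a b = rs_integral f' g a b"
  unfolding rs_integral_def using has_rs_integral_cong[of a b f f' g] by presburger

lemma has_rs_integral_add:
  assumes "has_rs_integral f1 g a b I1" "has_rs_integral f2 g a b I2"
  shows "has_rs_integral (\<lambda>u. f1 u + f2 u) g a b (I1 + I2)"
  unfolding has_rs_integral_iff
proof (intro allI impI)
  fix \<epsilon> :: real assume "\<epsilon> > 0"
  then have e: "\<epsilon> / 2 > 0" by simp
  obtain \<delta>1 where \<delta>1: "\<delta>1 > 0"
    "\<And>xs ts. fine_tagged_partition \<delta>1 xs ts a b \<Longrightarrow> \<bar>tagged_sum f1 g xs ts - I1\<bar> < \<epsilon> / 2"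
    using has_rs_integralE[OF assms(1) e] by metis
  obtain \<delta>2 where \<delta>2: "\<delta>2 > 0"
    "\<And>xs ts. fine_tagged_partition \<delta>2 xs ts a b \<Longrightarrow> \<bar>tagged_sum f2 g xs ts - I2\<bar> < \<epsilon> / 2"
    using has_rs_integralE[OF assms(2) e] by metis
  have "\<bar>tagged_sum (\<lambda>u. f1 u + f2 u) g xs ts - (I1 + I2)\<bar> < \<epsilon>"
    if "fine_tagged_partition (min \<delta>1 \<delta>2) xs ts a b" for xs ts
  proof -
    have "\<bar>tagged_sum f1 g xs ts - I1\<bar> < \<epsilon> / 2" "\<bar>tagged_sum f2 g xs ts - I2\<bar> < \<epsilon> / 2"
      using \<delta>1(2) \<delta>2(2) fine_tagged_partition_mono[OF that] by auto
    then show ?thesis unfolding tagged_sum_add by arith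
  qed
  with \<delta>1(1) \<delta>2(1) show "\<exists>\<delta>>0. \<forall>xs ts. fine_tagged_partition \<delta> xs ts a b \<longrightarrow>
      \<bar>tagged_sum (\<lambda>u. f1 u + f2 u) g xs ts - (I1 + I2)\<bar> < \<epsilon>"
    by (intro exI[of _ "min \<delta>1 \<delta>2"]) auto
qed

lemma has_rs_integral_zero: "has_rs_integral (\<lambda>u. 0) g a b 0"
  unfolding has_rs_integral_iff by (auto intro: exI[of _ 1])

definition variation_sum :: "(real \<Rightarrow> real) \<Rightarrow> real list \<Rightarrow> real" where
  "variation_sum g xs = adj_sum (\<lambda>x y. \<bar>g y - g x\<bar>) xs"

definition variation :: "(real \<Rightarrow> real) \<Rightarrow> real \<Rightarrow> real \<Rightarrow> real" where
  "variation g c d = (if c < d then Sup (variation_sum g ` {xs. is_partition xs c d}) else 0)"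

lemma variation_sum_append:
  "variation_sum g (xs @ c # ys) = variation_sum g (xs @ [c]) + variation_sum g (c # ys)"
  unfolding variation_sum_def by (rule adj_sum_append)

lemma abs_tagged_sum_le:
  "is_tagging xs ts \<Longrightarrow> (\<And>t. t \<in> set ts \<Longrightarrow> \<bar>h t\<bar> \<le> \<omega>) \<Longrightarrow>
     \<bar>tagged_sum h g xs ts\<bar> \<le> \<omega> * variation_sum g xs"
proof (induction xs ts rule: is_tagging.induct)
  case (1 x y zs t ts)
  have "\<bar>h t\<bar> \<le> \<omega>" using 1 by simp
  then have "\<bar>h t * (g y - g x)\<bar> \<le> \<omega> * \<bar>g y - g x\<bar>"
    by (simp add: abs_mult mult_right_mono)
  with 1 show ?case by (simp add: variation_sum_def algebra_simps)
qed (auto simp: variation_sum_def)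

lemma bounded_variation_on_iff:
  "bounded_variation_on g a b \<longleftrightarrow> (\<exists>B. \<forall>xs. is_partition xs a b \<longrightarrow> variation_sum g xs \<le> B)"
  unfolding bounded_variation_on_def variation_sum_def real_norm_def
    sum_nth_eq_adj_sum[of "\<lambda>x y. \<bar>g y - g x\<bar>"] ..

lemma variation_sum_extend:
  assumes "is_partition xs c d" "a \<le> c" "d \<le> b"
  obtains ys where "is_partition ys a b" "variation_sum g xs \<le> variation_sum g ys"
proof -
  obtain xs' where xs': "is_partition xs' a d" "variation_sum g xs \<le> variation_sum g xs'"
  proof (cases "a < c")
    case True
    obtain y zs where "xs = c # y # zs" using assms(1) by (rule is_partitionE)
    with assms(1) True show ?thesis
      by (intro that[of "a # xs"])
        (auto simp: is_partition_Cons_Cons variation_sum_def split: if_splits)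
  qed (use assms that in auto)
  show ?thesis
  proof (cases "d < b")
    case True
    obtain ys where ys: "xs' = ys @ [d]" using xs'(1) by (rule is_partition_snocE)
    have "is_partition (ys @ [d, b]) a b"
      using is_partition_append[of ys d a "[b]" b] xs'(1) ys True by simp
    moreover have "variation_sum g (ys @ [d, b]) = variation_sum g xs' + \<bar>g b - g d\<bar>"
      using variation_sum_append[of g ys d "[b]"] ys by (simp add: variation_sum_def)
    ultimately show ?thesis using xs' that by force
  qed (use assms xs' that in auto)
qed

lemma bounded_variation_on_subinterval:
  fixes g :: "real \<Rightarrow> real"
  assumes "bounded_variation_on g a b" "a \<le> c" "d \<le> b"
  shows "bounded_variation_on g c d"
proof -
  obtain B where B: "\<And>ys. is_partition ys a b \<Longrightarrow> variation_sum g ys \<le> B"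
    using assms(1) bounded_variation_on_iff by blast
  have "variation_sum g xs \<le> B" if xs: "is_partition xs c d" for xs
  proof -
    obtain ys where "is_partition ys a b" "variation_sum g xs \<le> variation_sum g ys"
      using variation_sum_extend[OF xs assms(2,3)] by metis
    with B show ?thesis by force
  qed
  then show ?thesis unfolding bounded_variation_on_iff by blast
qed

lemma variation_sum_le_variation:
  assumes "bounded_variation_on g a b" "a \<le> c" "d \<le> b" "is_partition xs c d"
  shows "variation_sum g xs \<le> variation g c d"
proof -
  obtain B where "\<And>xs. is_partition xs c d \<Longrightarrow> variation_sum g xs \<le> B"
    using bounded_variation_on_subinterval[OF assms(1-3)] bounded_variation_on_iff by blast
  then have "bdd_above (variation_sum g ` {xs. is_partition xs c d})"
    by (metis (mono_tags) bdd_aboveI2 mem_Collect_eq)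
  then show ?thesis
    unfolding variation_def using is_partition_bounds(1)[OF assms(4)] assms(4)
    by (auto intro: cSUP_upper)
qed

lemma abs_diff_le_variation:
  assumes "bounded_variation_on g a b" "a \<le> c" "c \<le> d" "d \<le> b"
  shows "\<bar>g d - g c\<bar> \<le> variation g c d"
proof (cases "c < d")
  case True
  with variation_sum_le_variation[OF assms(1,2,4), of "[c, d]"] show ?thesis
    by (simp add: variation_sum_def)
next
  case False
  with assms(3) show ?thesis by (simp add: variation_def)
qed

lemma variation_nonneg:
  assumes "bounded_variation_on g a b" "a \<le> c" "d \<le> b"
  shows "0 \<le> variation g c d"
proof (cases "c < d")
  case True
  with abs_diff_le_variation[OF assms(1,2) _ assms(3)] show ?thesis by force
qed (simp add: variation_def)

lemma variation_add_le:
  assumes "bounded_variation_on g a b" "a \<le> c" "c \<le> m" "m \<le> d" "d \<le> b"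
  shows "variation g c m + variation g m d \<le> variation g c d"
proof (cases "c < m \<and> m < d")
  case True
  have joint: "variation_sum g xs + variation_sum g ys \<le> variation g c d"
    if xs: "is_partition xs c m" and ys: "is_partition ys m d" for xs ys
  proof -
    obtain xs' where xs': "xs = xs' @ [m]" using xs by (rule is_partition_snocE)
    obtain ys' where ys': "ys = m # ys'" using ys by (metis is_partitionE)
    have "is_partition (xs' @ m # ys') c d" using is_partition_append xs ys xs' ys' by blast
    with variation_sum_le_variation[OF assms(1,2,5)] show ?thesis
      by (metis variation_sum_append xs' ys')
  qed
  have nonempty: "{xs. is_partition xs u v} \<noteq> {}" if "u < v" for u v
    using that is_partition_two by blast
  have "variation g c m \<le> variation g c d - variation_sum g ys" if ys: "is_partition ys m d" for ys
  proof -
    have "variation g c m = Sup (variation_sum g ` {xs. is_partition xs c m})"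
      using True by (simp add: variation_def)
    also have "\<dots> \<le> variation g c d - variation_sum g ys"
    proof (rule cSUP_least)
      show "{xs. is_partition xs c m} \<noteq> {}" using True by (intro nonempty) simp
    qed (use joint[OF _ ys] in force)
    finally show ?thesis .
  qed
  then have "variation g m d \<le> variation g c d - variation g c m"
  proof -
    have "variation g m d = Sup (variation_sum g ` {ys. is_partition ys m d})"
      using True by (simp add: variation_def)
    also have "\<dots> \<le> variation g c d - variation g c m"
    proof (rule cSUP_least)
      show "{ys. is_partition ys m d} \<noteq> {}" using True by (intro nonempty) simp
    qed (use \<open>\<And>ys. is_partition ys m d \<Longrightarrow> _\<close> in force)
    finally show ?thesis .
  qed
  then show ?thesis by simp
qed (use assms in \<open>auto simp: variation_def\<close>)

lemma variation_mono:
  assumes "bounded_variation_on g a b" "a \<le> c" "c \<le> d" "d \<le> b"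
  shows "variation g c d \<le> variation g a b"
  using variation_add_le[OF assms(1), of a c d] variation_add_le[OF assms(1), of a d b]
    variation_nonneg[OF assms(1), of a c] variation_nonneg[OF assms(1), of d b] assms
  by linarith

lemma adj_sum_variation_le:
  assumes "bounded_variation_on g A B" "is_partition xs a b" "A \<le> a" "b \<le> B"
  shows "adj_sum (variation g) xs \<le> variation g a b"
  using assms(2-4)
proof (induction xs arbitrary: a rule: induct_list012)
  case (3 x y zs)
  have xy: "x = a" "a < y" using "3.prems"(1) by (auto simp: is_partition_Cons_Cons)
  show ?case
  proof (cases "zs = []")
    case False
    then have yzs: "is_partition (y # zs) y b"
      using "3.prems"(1) by (auto simp: is_partition_Cons_Cons)
    have "y < b" using is_partition_bounds(1)[OF yzs] .
    with "3.IH"(2)[OF yzs] variation_add_le[OF assms(1), of a y b] xy "3.prems" show ?thesis by simp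
  qed (use "3.prems" xy in \<open>simp add: is_partition_Cons_Cons\<close>)
qed (auto simp: is_partition_def)

section \<open>Existence of the integral of a continuous function\<close>

lemma continuous_on_Icc_modulus:
  fixes h :: "real \<Rightarrow> real"
  assumes "continuous_on {a..b} h" "\<eta> > 0"
  obtains \<delta> where "\<delta> > 0" "\<And>u w. u \<in> {a..b} \<Longrightarrow> w \<in> {a..b} \<Longrightarrow> \<bar>u - w\<bar> < \<delta> \<Longrightarrow> \<bar>h u - h w\<bar> \<le> \<eta>"
proof -
  have "uniformly_continuous_on {a..b} h"
    using compact_uniformly_continuous[OF assms(1) compact_Icc] .
  with assms(2) obtain \<delta> where "\<delta> > 0"
    "\<And>u w. u \<in> {a..b} \<Longrightarrow> w \<in> {a..b} \<Longrightarrow> dist u w < \<delta> \<Longrightarrow> dist (h u) (h w) < \<eta>"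
    unfolding uniformly_continuous_on_def by metis
  with that show ?thesis by (force simp: dist_real_def)
qed

lemma continuous_on_Icc_abs_bound:
  fixes h :: "real \<Rightarrow> real"
  assumes "continuous_on {a..b} h"
  obtains M where "M \<ge> 0" "\<And>u. u \<in> {a..b} \<Longrightarrow> \<bar>h u\<bar> \<le> M"
proof -
  obtain B where "\<forall>y\<in>h ` {a..b}. norm y \<le> B"
    using compact_imp_bounded[OF compact_continuous_image[OF assms compact_Icc]] bounded_iff
    by metis
  then show ?thesis using that[of "max B 0"] by force
qed

lemma fine_partition_oscillation:
  assumes "is_partition xs a b" "successively (\<lambda>x y. y - x < \<delta>) xs"
    and "\<And>u w. u \<in> {a..b} \<Longrightarrow> w \<in> {a..b} \<Longrightarrow> \<bar>u - w\<bar> < \<delta> \<Longrightarrow> \<bar>f u - f w\<bar> \<le> \<omega>"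
  shows "successively (\<lambda>u v. \<forall>t\<in>{u..v}. \<forall>w\<in>{u..v}. \<bar>f t - f w\<bar> \<le> \<omega>) xs"
proof -
  have "successively (\<lambda>x y. (a \<le> x \<and> x < y \<and> y \<le> b) \<and> y - x < \<delta>) xs"
    using successively_conjI[OF is_partition_bounds(3)[OF assms(1)] assms(2)] .
  then show ?thesis
    by (rule successively_mono) (auto intro!: assms(3))
qed

lemma single_tag_left_sum_bound:
  assumes "is_partition zs c d" "c \<le> t" "t \<le> d" "\<And>u. u \<in> {c..d} \<Longrightarrow> \<bar>f t - f u\<bar> \<le> \<omega>"
  shows "\<bar>f t * (g d - g c) - adj_sum (\<lambda>x y. f x * (g y - g x)) zs\<bar> \<le> \<omega> * variation_sum g zs"
proof -
  have zs: "zs \<noteq> []" "hd zs = c" "last zs = d" using assms(1) by (auto simp: is_partition_def)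
  have "f t * (g d - g c) = adj_sum (\<lambda>x y. f t * (g y - g x)) zs"
    using adj_sum_telescope[OF zs(1), of g] zs by (simp add: adj_sum_mult_left)
  then have "f t * (g d - g c) - adj_sum (\<lambda>x y. f x * (g y - g x)) zs
      = adj_sum (\<lambda>x y. (f t - f x) * (g y - g x)) zs"
    by (simp add: adj_sum_diff[symmetric] left_diff_distrib)
  also have "\<bar>\<dots>\<bar> \<le> adj_sum (\<lambda>x y. \<omega> * \<bar>g y - g x\<bar>) zs"
    by (rule abs_adj_sum_le, rule successively_mono[OF is_partition_bounds(3)[OF assms(1)]])
      (use assms(4) in \<open>auto simp: abs_mult intro!: mult_right_mono\<close>)
  also have "\<dots> = \<omega> * variation_sum g zs"
    by (simp add: adj_sum_mult_left variation_sum_def)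
  finally show ?thesis .
qed

lemma tagged_sum_refinement_bound:
  assumes "is_partition xs a b" "is_tagging xs ts" "is_partition ys a b" "set xs \<subseteq> set ys"
    and "successively (\<lambda>u v. \<forall>t\<in>{u..v}. \<forall>w\<in>{u..v}. \<bar>f t - f w\<bar> \<le> \<omega>) xs"
  shows "\<bar>tagged_sum f g xs ts - adj_sum (\<lambda>x y. f x * (g y - g x)) ys\<bar> \<le> \<omega> * variation_sum g ys"
  using assms
proof (induction xs arbitrary: a ts ys rule: induct_list012)
  case (3 x y zs)
  define F where "F = (\<lambda>x y. f x * (g y - g x))"
  obtain t ts' where ts: "ts = t # ts'" "x \<le> t" "t \<le> y" "is_tagging (y # zs) ts'"
    using "3.prems"(2) by (cases ts) auto
  have xy: "x = a" "a < y" using "3.prems"(1) by (auto simp: is_partition_Cons_Cons)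
  obtain ys1 ys2 where ys: "ys = ys1 @ y # ys2"
    using "3.prems"(4) by (meson list.set_intros split_list subset_code(1))
  have ys1: "is_partition (ys1 @ [y]) a y"
    using is_partition_split(1) "3.prems"(3) xy(2) unfolding ys by blast
  have cell: "\<bar>f t * (g y - g x) - adj_sum F (ys1 @ [y])\<bar> \<le> \<omega> * variation_sum g (ys1 @ [y])"
    unfolding F_def xy(1) using "3.prems"(5) ts xy by (intro single_tag_left_sum_bound[OF ys1]) auto
  have split: "adj_sum F ys = adj_sum F (ys1 @ [y]) + adj_sum F (y # ys2)"
    "variation_sum g ys = variation_sum g (ys1 @ [y]) + variation_sum g (y # ys2)"
    unfolding ys by (rule adj_sum_append variation_sum_append)+
  show ?case
  proof (cases "zs = []")
    case True
    then have "ys2 = []"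
      using "3.prems"(1,3) is_partition_split(3) unfolding ys by (auto simp: is_partition_Cons_Cons)
    with cell split ts True show ?thesis by (simp add: F_def variation_sum_def)
  next
    case False
    then have tail: "is_partition (y # zs) y b"
      using "3.prems"(1) by (auto simp: is_partition_Cons_Cons)
    have ys2: "is_partition (y # ys2) y b"
      using is_partition_split(2) "3.prems"(3) is_partition_bounds(1)[OF tail] unfolding ys by blast
    have "set (y # zs) \<subseteq> set (y # ys2)"
    proof
      fix w assume w: "w \<in> set (y # zs)"
      have "u < y" if "u \<in> set ys1" for u
        using "3.prems"(3) that unfolding ys is_partition_def by (auto simp: sorted_wrt_append)
      moreover have "w = y \<or> y < w" using tail w unfolding is_partition_def by auto
      ultimately show "w \<in> set (y # ys2)" using w "3.prems"(4) unfolding ys by fastforce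
    qed
    with "3.IH"(2)[OF tail ts(4) ys2] "3.prems"(5)
    have "\<bar>tagged_sum f g (y # zs) ts' - adj_sum F (y # ys2)\<bar> \<le> \<omega> * variation_sum g (y # ys2)"
      by (simp add: F_def)
    with cell split ts show ?thesis by (simp add: F_def algebra_simps)
  qed
qed (auto simp: is_partition_def)

lemma is_partition_union:
  assumes "is_partition xs a b" "is_partition ys a b"
  shows "is_partition (sorted_list_of_set (set xs \<union> set ys)) a b"
proof -
  define zs where "zs = sorted_list_of_set (set xs \<union> set ys)"
  have sorted: "sorted_wrt (<) zs" and set_zs: "set zs = set xs \<union> set ys"
    unfolding zs_def by (simp_all add: strict_sorted_list_of_set)
  have ab: "a \<in> set zs" "b \<in> set zs" "a < b" "set zs \<subseteq> {a..b}"
    using assms is_partition_bounds(1,2)[OF assms(1)] is_partition_bounds(2)[OF assms(2)]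
    unfolding set_zs is_partition_def by (auto intro: hd_in_set last_in_set)
  obtain z zs' where zs_Cons: "zs = z # zs'" using ab by (cases zs) auto
  obtain zs'' l where zs_snoc: "zs = zs'' @ [l]" using ab by (cases zs rule: rev_cases) auto
  have "hd zs = a"
  proof (rule antisym)
    show "hd zs \<le> a" using sorted ab(1) unfolding zs_Cons by auto
    show "a \<le> hd zs" using ab(4) unfolding zs_Cons by auto
  qed
  moreover have "last zs = b"
  proof (rule antisym)
    show "last zs \<le> b" using ab(4) unfolding zs_snoc by auto
    show "b \<le> last zs" using sorted ab(2) unfolding zs_snoc by (auto simp: sorted_wrt_append)
  qed
  moreover have "length zs \<ge> 2"
    using ab \<open>hd zs = a\<close> \<open>last zs = b\<close> unfolding zs_Cons by (cases zs') auto
  ultimately show ?thesis using sorted unfolding is_partition_def zs_def by simp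
qed

lemma fine_tagged_sums_cauchy:
  assumes "continuous_on {a..b} f" "bounded_variation_on g a b" "\<epsilon> > 0"
  shows "\<exists>\<delta>>0. \<forall>xs ts ys us. fine_tagged_partition \<delta> xs ts a b \<and> fine_tagged_partition \<delta> ys us a b \<longrightarrow>
    \<bar>tagged_sum f g xs ts - tagged_sum f g ys us\<bar> < \<epsilon>"
proof -
  obtain B where "\<And>zs. is_partition zs a b \<Longrightarrow> variation_sum g zs \<le> B"
    using assms(2) bounded_variation_on_iff by blast
  then obtain B where B: "B \<ge> 0" "\<And>zs. is_partition zs a b \<Longrightarrow> variation_sum g zs \<le> B"
    by (meson max.cobounded1 max.cobounded2 order_trans)
  define \<eta> where "\<eta> = \<epsilon> / (2 * (B + 1))"
  have \<eta>: "\<eta> > 0" "2 * (\<eta> * B) < \<epsilon>"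
    using assms(3) B(1) by (auto simp: \<eta>_def field_simps)
  obtain \<delta> where \<delta>: "\<delta> > 0"
    "\<And>u w. u \<in> {a..b} \<Longrightarrow> w \<in> {a..b} \<Longrightarrow> \<bar>u - w\<bar> < \<delta> \<Longrightarrow> \<bar>f u - f w\<bar> \<le> \<eta>"
    using continuous_on_Icc_modulus[OF assms(1) \<eta>(1)] by metis
  have close: "\<bar>tagged_sum f g xs ts - adj_sum (\<lambda>x y. f x * (g y - g x)) zs\<bar> \<le> \<eta> * B"
    if xs: "fine_tagged_partition \<delta> xs ts a b" and zs: "is_partition zs a b" "set xs \<subseteq> set zs"
    for xs ts zs
  proof -
    have "successively (\<lambda>u v. \<forall>t\<in>{u..v}. \<forall>w\<in>{u..v}. \<bar>f t - f w\<bar> \<le> \<eta>) xs"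
      using xs \<delta>(2) unfolding fine_tagged_partition_def by (blast intro: fine_partition_oscillation)
    with xs zs have "\<bar>tagged_sum f g xs ts - adj_sum (\<lambda>x y. f x * (g y - g x)) zs\<bar>
        \<le> \<eta> * variation_sum g zs"
      unfolding fine_tagged_partition_def by (blast intro: tagged_sum_refinement_bound)
    also have "\<dots> \<le> \<eta> * B" using B(2)[OF zs(1)] \<eta>(1) by simp
    finally show ?thesis .
  qed
  have "\<bar>tagged_sum f g xs ts - tagged_sum f g ys us\<bar> < \<epsilon>"
    if "fine_tagged_partition \<delta> xs ts a b" "fine_tagged_partition \<delta> ys us a b" for xs ts ys us
  proof -
    let ?zs = "sorted_list_of_set (set xs \<union> set ys)"
    have "is_partition ?zs a b"
      using that by (intro is_partition_union) (auto simp: fine_tagged_partition_def)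
    with close[OF that(1)] close[OF that(2)]
    have "\<bar>tagged_sum f g xs ts - adj_sum (\<lambda>x y. f x * (g y - g x)) ?zs\<bar> \<le> \<eta> * B"
      "\<bar>tagged_sum f g ys us - adj_sum (\<lambda>x y. f x * (g y - g x)) ?zs\<bar> \<le> \<eta> * B"
      by auto
    with \<eta>(2) show ?thesis by linarith
  qed
  with \<delta>(1) show ?thesis by blast
qed

lemma fine_tagged_partition_sequence:
  assumes "a < b"
  obtains P :: "nat \<Rightarrow> real list \<times> real list"
  where "\<And>\<delta>. \<delta> > 0 \<Longrightarrow> \<exists>N. \<forall>n\<ge>N. fine_tagged_partition \<delta> (fst (P n)) (snd (P n)) a b"
proof -
  have "\<forall>n. \<exists>p. fine_tagged_partition (inverse (real (Suc n))) (fst p) (snd p) a b"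
    using exists_fine_tagged_partition[OF _ assms] by simp
  then obtain P
    where P: "\<And>n. fine_tagged_partition (inverse (real (Suc n))) (fst (P n)) (snd (P n)) a b"
    by metis
  have "\<exists>N. \<forall>n\<ge>N. fine_tagged_partition \<delta> (fst (P n)) (snd (P n)) a b" if "\<delta> > 0" for \<delta>
  proof -
    obtain N where N: "inverse (real (Suc N)) < \<delta>" using reals_Archimedean \<open>\<delta> > 0\<close> by blast
    have "fine_tagged_partition \<delta> (fst (P n)) (snd (P n)) a b" if "n \<ge> N" for n
    proof (rule fine_tagged_partition_mono[OF P])
      have "inverse (real (Suc n)) \<le> inverse (real (Suc N))"
        using that by (intro le_imp_inverse_le) auto
      with N show "inverse (real (Suc n)) \<le> \<delta>" by linarith
    qed
    then show ?thesis by blast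
  qed
  with that show ?thesis by blast
qed

lemma has_rs_integral_if_cauchy:
  assumes "a < b"
    and cauchy: "\<And>\<epsilon>. \<epsilon> > 0 \<Longrightarrow> \<exists>\<delta>>0. \<forall>xs ts ys us.
      fine_tagged_partition \<delta> xs ts a b \<and> fine_tagged_partition \<delta> ys us a b \<longrightarrow>
      \<bar>tagged_sum f g xs ts - tagged_sum f g ys us\<bar> < \<epsilon>"
  shows "\<exists>I. has_rs_integral f g a b I"
proof -
  obtain P :: "nat \<Rightarrow> real list \<times> real list" where eventually_fine:
    "\<And>\<delta>. \<delta> > 0 \<Longrightarrow> \<exists>N. \<forall>n\<ge>N. fine_tagged_partition \<delta> (fst (P n)) (snd (P n)) a b"
    using fine_tagged_partition_sequence[OF assms(1)] by metis
  define s where "s n = tagged_sum f g (fst (P n)) (snd (P n))" for n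
  have "Cauchy s"
  proof (rule CauchyI)
    fix \<epsilon> :: real assume "\<epsilon> > 0"
    then obtain \<delta> where \<delta>: "\<delta> > 0" "\<forall>xs ts ys us.
      fine_tagged_partition \<delta> xs ts a b \<and> fine_tagged_partition \<delta> ys us a b \<longrightarrow>
      \<bar>tagged_sum f g xs ts - tagged_sum f g ys us\<bar> < \<epsilon>"
      using cauchy by blast
    then show "\<exists>N. \<forall>m\<ge>N. \<forall>n\<ge>N. norm (s m - s n) < \<epsilon>"
      using eventually_fine[OF \<delta>(1)] unfolding s_def real_norm_def by blast
  qed
  then obtain I where I: "s \<longlonglongrightarrow> I" by (auto simp: Cauchy_convergent_iff convergent_def)
  have "has_rs_integral f g a b I"
    unfolding has_rs_integral_iff
  proof (intro allI impI)
    fix \<epsilon> :: real assume "\<epsilon> > 0"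
    then obtain \<delta> where \<delta>: "\<delta> > 0" "\<forall>xs ts ys us.
      fine_tagged_partition \<delta> xs ts a b \<and> fine_tagged_partition \<delta> ys us a b \<longrightarrow>
      \<bar>tagged_sum f g xs ts - tagged_sum f g ys us\<bar> < \<epsilon> / 2"
      using cauchy[of "\<epsilon> / 2"] by auto
    obtain N1 where N1: "\<And>n. n \<ge> N1 \<Longrightarrow> fine_tagged_partition \<delta> (fst (P n)) (snd (P n)) a b"
      using eventually_fine[OF \<delta>(1)] by blast
    obtain N2 where N2: "\<And>n. n \<ge> N2 \<Longrightarrow> \<bar>s n - I\<bar> < \<epsilon> / 2"
      using I \<open>\<epsilon> > 0\<close> unfolding LIMSEQ_iff real_norm_def by (meson half_gt_zero)
    have "\<bar>tagged_sum f g xs ts - I\<bar> < \<epsilon>" if xs: "fine_tagged_partition \<delta> xs ts a b" for xs ts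
    proof -
      have "\<bar>tagged_sum f g xs ts - s (max N1 N2)\<bar> < \<epsilon> / 2"
        using \<delta>(2) xs N1[of "max N1 N2"] unfolding s_def by simp
      moreover have "\<bar>s (max N1 N2) - I\<bar> < \<epsilon> / 2" using N2[of "max N1 N2"] by simp
      ultimately show ?thesis by linarith
    qed
    with \<delta>(1) show "\<exists>\<delta>>0. \<forall>xs ts. fine_tagged_partition \<delta> xs ts a b \<longrightarrow>
        \<bar>tagged_sum f g xs ts - I\<bar> < \<epsilon>"
      by blast
  qed
  then show ?thesis ..
qed

lemma has_rs_integral_rs_integral:
  assumes "a < b" "continuous_on {a..b} f" "bounded_variation_on g a b"
  shows "has_rs_integral f g a b (rs_integral f g a b)"
proof -
  obtain I where "has_rs_integral f g a b I"
    using has_rs_integral_if_cauchy[OF assms(1) fine_tagged_sums_cauchy[OF assms(2,3)]] by blast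
  with rs_integral_eqI[OF assms(1)] show ?thesis by simp
qed

lemma rs_integral_refl [simp]: "rs_integral f g a a = 0"
  by (simp add: rs_integral_def)

lemma has_rs_integral_sum_list:
  assumes "a < b" "bounded_variation_on g a b" "\<And>w. w \<in> set ws \<Longrightarrow> continuous_on {a..b} (\<phi> w)"
  shows "has_rs_integral (\<lambda>u. \<Sum>w\<leftarrow>ws. \<phi> w u) g a b (\<Sum>w\<leftarrow>ws. rs_integral (\<phi> w) g a b)"
  using assms(3)
proof (induction ws)
  case (Cons w ws)
  then show ?case
    using has_rs_integral_add[OF has_rs_integral_rs_integral[OF assms(1) _ assms(2)]] by simp
qed (simp add: has_rs_integral_zero)

lemma rs_integral_sum_list:
  assumes "a < b" "bounded_variation_on g a b" "\<And>w. w \<in> set ws \<Longrightarrow> continuous_on {a..b} (\<phi> w)"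
  shows "rs_integral (\<lambda>u. \<Sum>w\<leftarrow>ws. \<phi> w u) g a b = (\<Sum>w\<leftarrow>ws. rs_integral (\<phi> w) g a b)"
  using rs_integral_eqI[OF assms(1) has_rs_integral_sum_list[OF assms]] .

lemma has_rs_integral_oscillation_bound:
  assumes "a < b" "has_rs_integral f g a b I" "bounded_variation_on g a b"
    and "\<And>u. u \<in> {a..b} \<Longrightarrow> \<bar>f u - c\<bar> \<le> \<omega>"
  shows "\<bar>I - c * (g b - g a)\<bar> \<le> \<omega> * variation g a b"
proof (rule field_le_epsilon)
  fix \<epsilon> :: real assume "\<epsilon> > 0"
  have "\<omega> \<ge> 0" using assms(4)[of a] assms(1) by force
  obtain \<delta> where \<delta>: "\<delta> > 0"
    "\<And>xs ts. fine_tagged_partition \<delta> xs ts a b \<Longrightarrow> \<bar>tagged_sum f g xs ts - I\<bar> < \<epsilon>"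
    using has_rs_integralE[OF assms(2) \<open>\<epsilon> > 0\<close>] by metis
  obtain xs ts where P: "fine_tagged_partition \<delta> xs ts a b"
    using exists_fine_tagged_partition[OF \<delta>(1) assms(1)] by blast
  then have xs: "is_partition xs a b" "is_tagging xs ts" "hd xs = a" "last xs = b"
    by (auto simp: fine_tagged_partition_def is_partition_def)
  have "tagged_sum (\<lambda>u. f u - c) g xs ts = tagged_sum f g xs ts - c * (g b - g a)"
    using tagged_sum_diff_const[OF xs(2)] xs by simp
  moreover have "\<bar>tagged_sum (\<lambda>u. f u - c) g xs ts\<bar> \<le> \<omega> * variation_sum g xs"
    using is_partition_tags_bounds[OF xs(1,2)] assms(4) by (intro abs_tagged_sum_le[OF xs(2)]) auto
  moreover have "\<omega> * variation_sum g xs \<le> \<omega> * variation g a b"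
    using variation_sum_le_variation[OF assms(3) order_refl order_refl xs(1)] \<open>\<omega> \<ge> 0\<close>
    by (simp add: mult_left_mono)
  ultimately show "\<bar>I - c * (g b - g a)\<bar> \<le> \<omega> * variation g a b + \<epsilon>"
    using \<delta>(2)[OF P] by linarith
qed

lemma rs_integral_combine:
  assumes "a < c" "c < b" "continuous_on {a..b} f" "bounded_variation_on g a b"
  shows "rs_integral f g a b = rs_integral f g a c + rs_integral f g c b"
proof -
  define I I1 I2
    where "I = rs_integral f g a b" and "I1 = rs_integral f g a c" and "I2 = rs_integral f g c b"
  have HI: "has_rs_integral f g a b I" unfolding I_def
    using assms by (intro has_rs_integral_rs_integral) auto
  have HI1: "has_rs_integral f g a c I1" unfolding I1_def
    using assms by (intro has_rs_integral_rs_integral continuous_on_subset[OF assms(3)]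
        bounded_variation_on_subinterval[OF assms(4)]) auto
  have HI2: "has_rs_integral f g c b I2" unfolding I2_def
    using assms by (intro has_rs_integral_rs_integral continuous_on_subset[OF assms(3)]
        bounded_variation_on_subinterval[OF assms(4)]) auto
  have "\<bar>I - (I1 + I2)\<bar> \<le> 0 + \<epsilon>" if "\<epsilon> > 0" for \<epsilon>
  proof -
    have e: "\<epsilon> / 3 > 0" using that by simp
    obtain \<delta> where \<delta>: "\<delta> > 0"
      "\<And>xs ts. fine_tagged_partition \<delta> xs ts a b \<Longrightarrow> \<bar>tagged_sum f g xs ts - I\<bar> < \<epsilon> / 3"
      using has_rs_integralE[OF HI e] by metis
    obtain \<delta>1 where \<delta>1: "\<delta>1 > 0"
      "\<And>xs ts. fine_tagged_partition \<delta>1 xs ts a c \<Longrightarrow> \<bar>tagged_sum f g xs ts - I1\<bar> < \<epsilon> / 3"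
      using has_rs_integralE[OF HI1 e] by metis
    obtain \<delta>2 where \<delta>2: "\<delta>2 > 0"
      "\<And>xs ts. fine_tagged_partition \<delta>2 xs ts c b \<Longrightarrow> \<bar>tagged_sum f g xs ts - I2\<bar> < \<epsilon> / 3"
      using has_rs_integralE[OF HI2 e] by metis
    define m where "m = min \<delta> (min \<delta>1 \<delta>2)"
    have m: "m > 0" "m \<le> \<delta>" "m \<le> \<delta>1" "m \<le> \<delta>2" using \<delta>(1) \<delta>1(1) \<delta>2(1) by (auto simp: m_def)
    obtain xs1 ts1 where P1: "fine_tagged_partition m xs1 ts1 a c"
      using exists_fine_tagged_partition[OF m(1) assms(1)] by blast
    obtain xs2 ts2 where P2: "fine_tagged_partition m xs2 ts2 c b"
      using exists_fine_tagged_partition[OF m(1) assms(2)] by blast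
    obtain xs ts where P: "fine_tagged_partition m xs ts a b"
      and split: "tagged_sum f g xs ts = tagged_sum f g xs1 ts1 + tagged_sum f g xs2 ts2"
      using fine_tagged_partition_append[OF P1 P2] by blast
    have "\<bar>tagged_sum f g xs ts - I\<bar> < \<epsilon> / 3"
      using \<delta>(2)[OF fine_tagged_partition_mono[OF P m(2)]] .
    moreover have "\<bar>tagged_sum f g xs1 ts1 - I1\<bar> < \<epsilon> / 3"
      using \<delta>1(2)[OF fine_tagged_partition_mono[OF P1 m(3)]] .
    moreover have "\<bar>tagged_sum f g xs2 ts2 - I2\<bar> < \<epsilon> / 3"
      using \<delta>2(2)[OF fine_tagged_partition_mono[OF P2 m(4)]] .
    ultimately show ?thesis using split by linarith
  qed
  then have "\<bar>I - (I1 + I2)\<bar> \<le> 0" by (rule field_le_epsilon)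
  then show ?thesis unfolding I_def I1_def I2_def by simp
qed

lemma rs_integral_increment:
  assumes "a \<le> u" "u \<le> v" "v \<le> b" "continuous_on {a..b} f" "bounded_variation_on g a b"
  shows "rs_integral f g a v - rs_integral f g a u = rs_integral f g u v"
proof (cases "a < u \<and> u < v")
  case True
  with assms show ?thesis
    using rs_integral_combine[OF _ _ continuous_on_subset[OF assms(4)]
        bounded_variation_on_subinterval[OF assms(5)], of a u v] by auto
next
  case False
  with assms(1,2) consider "a = u" | "u = v" by linarith
  then show ?thesis by cases auto
qed

lemma rs_integral_increment_approx:
  assumes "a \<le> u" "u < v" "v \<le> b" "continuous_on {a..b} f" "bounded_variation_on g a b"
    and "\<And>t. t \<in> {u..v} \<Longrightarrow> \<bar>f t - f u\<bar> \<le> \<eta>"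
  shows "\<bar>rs_integral f g a v - rs_integral f g a u - f u * (g v - g u)\<bar> \<le> \<eta> * variation g u v"
proof -
  have "has_rs_integral f g u v (rs_integral f g u v)"
    using assms by (intro has_rs_integral_rs_integral continuous_on_subset[OF assms(4)]
        bounded_variation_on_subinterval[OF assms(5)]) auto
  from has_rs_integral_oscillation_bound[OF assms(2) this] show ?thesis
    using rs_integral_increment[of a u v b f g] bounded_variation_on_subinterval[OF assms(5)] assms
    by auto
qed

lemma abs_rs_integral_increment_le:
  assumes "a \<le> u" "u < v" "v \<le> b" "continuous_on {a..b} f" "bounded_variation_on g a b"
    and "\<And>t. t \<in> {u..v} \<Longrightarrow> \<bar>f t - f u\<bar> \<le> \<eta>" "\<bar>f u\<bar> \<le> M"
  shows "\<bar>rs_integral f g a v - rs_integral f g a u\<bar> \<le> M * \<bar>g v - g u\<bar> + \<eta> * variation g a b"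
proof -
  have "\<eta> \<ge> 0" using assms(6)[of u] assms(2) by force
  have "\<bar>rs_integral f g a v - rs_integral f g a u - f u * (g v - g u)\<bar> \<le> \<eta> * variation g u v"
    by (rule rs_integral_increment_approx[OF assms(1-6)])
  moreover have "\<eta> * variation g u v \<le> \<eta> * variation g a b"
    using variation_mono[OF assms(5)] assms(1-3) \<open>\<eta> \<ge> 0\<close> by (simp add: mult_left_mono)
  moreover have "\<bar>f u * (g v - g u)\<bar> \<le> M * \<bar>g v - g u\<bar>"
    unfolding abs_mult by (rule mult_right_mono[OF assms(7) abs_ge_zero])
  ultimately show ?thesis by linarith
qed

lemma continuous_on_rs_integral:
  assumes "continuous_on {a..b} f" "continuous_on {a..b} g" "bounded_variation_on g a b"
  shows "continuous_on {a..b} (\<lambda>u. rs_integral f g a u)"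
  unfolding continuous_on_iff
proof (intro ballI allI impI)
  fix x \<epsilon> :: real assume x: "x \<in> {a..b}" and "\<epsilon> > 0"
  define F where "F u = rs_integral f g a u" for u
  define V where "V = variation g a b"
  obtain M where M: "M \<ge> 0" "\<And>u. u \<in> {a..b} \<Longrightarrow> \<bar>f u\<bar> \<le> M"
    using continuous_on_Icc_abs_bound[OF assms(1)] by metis
  have V: "V \<ge> 0" unfolding V_def using variation_nonneg[OF assms(3)] by simp
  define \<eta> where "\<eta> = \<epsilon> / (2 * (V + 1))"
  have \<eta>: "\<eta> > 0" "\<eta> * V < \<epsilon> / 2" using \<open>\<epsilon> > 0\<close> V by (auto simp: \<eta>_def field_simps)
  obtain \<delta>1 where \<delta>1: "\<delta>1 > 0"
    "\<And>u w. u \<in> {a..b} \<Longrightarrow> w \<in> {a..b} \<Longrightarrow> \<bar>u - w\<bar> < \<delta>1 \<Longrightarrow> \<bar>f u - f w\<bar> \<le> \<eta>"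
    using continuous_on_Icc_modulus[OF assms(1) \<eta>(1)] by metis
  have e: "\<epsilon> / (2 * (M + 1)) > 0" "M * (\<epsilon> / (2 * (M + 1))) < \<epsilon> / 2"
    using \<open>\<epsilon> > 0\<close> M(1) by (auto simp: field_simps)
  obtain \<delta>2 where \<delta>2: "\<delta>2 > 0"
    "\<And>y. y \<in> {a..b} \<Longrightarrow> dist y x < \<delta>2 \<Longrightarrow> dist (g y) (g x) < \<epsilon> / (2 * (M + 1))"
    using assms(2) x e(1) unfolding continuous_on_iff by metis
  have increment: "\<bar>F v - F u\<bar> < \<epsilon>"
    if uv: "a \<le> u" "u < v" "v \<le> b" "v - u < \<delta>1" and "\<bar>g v - g u\<bar> < \<epsilon> / (2 * (M + 1))" for u v
  proof -
    have "\<bar>F v - F u\<bar> \<le> M * \<bar>g v - g u\<bar> + \<eta> * V"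
      unfolding F_def V_def using uv M(2)
      by (intro abs_rs_integral_increment_le[OF _ _ _ assms(1,3)] \<delta>1(2)) auto
    moreover have "M * \<bar>g v - g u\<bar> \<le> M * (\<epsilon> / (2 * (M + 1)))"
      using that(5) M(1) by (intro mult_left_mono) auto
    ultimately show ?thesis using \<eta>(2) e(2) by linarith
  qed
  have "dist (F y) (F x) < \<epsilon>" if y: "y \<in> {a..b}" "dist y x < min \<delta>1 \<delta>2" for y
  proof -
    have g_close: "\<bar>g y - g x\<bar> < \<epsilon> / (2 * (M + 1))" using \<delta>2(2) y by (simp add: dist_real_def)
    consider "y = x" | "x < y" | "y < x" by linarith
    then show ?thesis
    proof cases
      case 2 with increment[of x y] x y g_close show ?thesis by (simp add: dist_real_def)
    next
      case 3 with increment[of y x] x y g_close show ?thesis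
        by (simp add: dist_real_def abs_minus_commute)
    qed (use \<open>\<epsilon> > 0\<close> in simp)
  qed
  with \<delta>1(1) \<delta>2(1) show "\<exists>\<delta>>0. \<forall>y\<in>{a..b}. dist y x < \<delta> \<longrightarrow> dist (F y) (F x) < \<epsilon>"
    by (intro exI[of _ "min \<delta>1 \<delta>2"]) auto
qed

section \<open>Integration by parts\<close>

lemma rs_integral_product_cell_estimate:
  fixes f g \<alpha> \<beta> :: "real \<Rightarrow> real" and a :: real
  defines "F \<equiv> \<lambda>u. rs_integral f \<alpha> a u" and "G \<equiv> \<lambda>u. rs_integral g \<beta> a u"
  assumes "continuous_on {a..b} f" "continuous_on {a..b} g"
    and "bounded_variation_on \<alpha> a b" "bounded_variation_on \<beta> a b"
    and "a \<le> x" "x < y" "y \<le> b" "\<eta> \<ge> 0"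
    and "\<And>t. t \<in> {x..y} \<Longrightarrow> \<bar>f t - f x\<bar> \<le> \<eta>" "\<And>t. t \<in> {x..y} \<Longrightarrow> \<bar>g t - g x\<bar> \<le> \<eta>"
    and dG_small: "\<bar>G y - G x\<bar> \<le> \<eta>"
    and bounds: "\<bar>f x\<bar> \<le> Mf" "\<bar>F x\<bar> \<le> MF" "\<bar>G y\<bar> \<le> MG"
  shows "\<bar>F y * G y - F x * G x - (f x * G x * (\<alpha> y - \<alpha> x) + g x * F x * (\<beta> y - \<beta> x))\<bar>
    \<le> \<eta> * ((MG + Mf) * variation \<alpha> x y + MF * variation \<beta> x y)"
proof -
  have dF: "\<bar>(F y - F x) - f x * (\<alpha> y - \<alpha> x)\<bar> \<le> \<eta> * variation \<alpha> x y"
    unfolding F_def by (rule rs_integral_increment_approx[OF assms(7-9,3,5,11)])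
  have dG: "\<bar>(G y - G x) - g x * (\<beta> y - \<beta> x)\<bar> \<le> \<eta> * variation \<beta> x y"
    unfolding G_def by (rule rs_integral_increment_approx[OF assms(7-9,4,6,12)])
  have d\<alpha>: "\<bar>\<alpha> y - \<alpha> x\<bar> \<le> variation \<alpha> x y"
    using abs_diff_le_variation[OF assms(5)] assms by simp
  have v: "0 \<le> variation \<alpha> x y" "0 \<le> variation \<beta> x y"
    using variation_nonneg[OF assms(5)] variation_nonneg[OF assms(6)] assms by auto
  have b1: "\<bar>((F y - F x) - f x * (\<alpha> y - \<alpha> x)) * G y\<bar> \<le> (\<eta> * variation \<alpha> x y) * MG"
    unfolding abs_mult by (rule mult_mono[OF dF bounds(3)]) (use v \<open>\<eta> \<ge> 0\<close> in auto)
  have b2: "\<bar>f x * (\<alpha> y - \<alpha> x) * (G y - G x)\<bar> \<le> (Mf * variation \<alpha> x y) * \<eta>"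
    unfolding abs_mult
    by (rule mult_mono[OF mult_mono[OF bounds(1) d\<alpha>] dG_small]) (use v bounds(1) in auto)
  have b3: "\<bar>F x * ((G y - G x) - g x * (\<beta> y - \<beta> x))\<bar> \<le> MF * (\<eta> * variation \<beta> x y)"
    unfolding abs_mult by (rule mult_mono[OF bounds(2) dG]) (use bounds(2) in auto)
  have "F y * G y - F x * G x - (f x * G x * (\<alpha> y - \<alpha> x) + g x * F x * (\<beta> y - \<beta> x))
      = ((F y - F x) - f x * (\<alpha> y - \<alpha> x)) * G y + f x * (\<alpha> y - \<alpha> x) * (G y - G x)
        + F x * ((G y - G x) - g x * (\<beta> y - \<beta> x))"
    by (simp add: algebra_simps)
  also have "\<bar>\<dots>\<bar> \<le> \<bar>((F y - F x) - f x * (\<alpha> y - \<alpha> x)) * G y\<bar> + \<bar>f x * (\<alpha> y - \<alpha> x) * (G y - G x)\<bar>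
        + \<bar>F x * ((G y - G x) - g x * (\<beta> y - \<beta> x))\<bar>"
    by (intro order_trans[OF abs_triangle_ineq] add_right_mono abs_triangle_ineq)
  also have "\<dots> \<le> \<eta> * ((MG + Mf) * variation \<alpha> x y + MF * variation \<beta> x y)"
    using b1 b2 b3 by (simp add: distrib_left distrib_right mult_ac)
  finally show ?thesis .
qed

lemma rs_integral_product_partition_estimate:
  fixes f g \<alpha> \<beta> :: "real \<Rightarrow> real" and a :: real
  defines "F \<equiv> \<lambda>u. rs_integral f \<alpha> a u" and "G \<equiv> \<lambda>u. rs_integral g \<beta> a u"
  assumes "continuous_on {a..b} f" "continuous_on {a..b} g"
    and "bounded_variation_on \<alpha> a b" "bounded_variation_on \<beta> a b"
    and xs: "is_partition xs a b" and "\<eta> \<ge> 0"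
    and osc: "successively (\<lambda>x y. \<forall>t\<in>{x..y}. \<bar>f t - f x\<bar> \<le> \<eta> \<and> \<bar>g t - g x\<bar> \<le> \<eta>) xs"
      "successively (\<lambda>x y. \<bar>G y - G x\<bar> \<le> \<eta>) xs"
    and bounds: "\<And>u. u \<in> {a..b} \<Longrightarrow> \<bar>f u\<bar> \<le> Mf" "\<And>u. u \<in> {a..b} \<Longrightarrow> \<bar>F u\<bar> \<le> MF"
      "\<And>u. u \<in> {a..b} \<Longrightarrow> \<bar>G u\<bar> \<le> MG"
  shows "\<bar>F b * G b - adj_sum (\<lambda>x y. f x * G x * (\<alpha> y - \<alpha> x) + g x * F x * (\<beta> y - \<beta> x)) xs\<bar>
    \<le> \<eta> * ((MG + Mf) * variation \<alpha> a b + MF * variation \<beta> a b)"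
proof -
  have "a \<in> {a..b}" using is_partition_bounds(1)[OF xs] by simp
  then have M: "Mf \<ge> 0" "MF \<ge> 0" "MG \<ge> 0" using bounds by (meson abs_ge_zero order_trans)+
  have cell: "\<bar>F y * G y - F x * G x - (f x * G x * (\<alpha> y - \<alpha> x) + g x * F x * (\<beta> y - \<beta> x))\<bar>
      \<le> \<eta> * ((MG + Mf) * variation \<alpha> x y + MF * variation \<beta> x y)"
    if "a \<le> x \<and> x < y \<and> y \<le> b" "\<forall>t\<in>{x..y}. \<bar>f t - f x\<bar> \<le> \<eta> \<and> \<bar>g t - g x\<bar> \<le> \<eta>"
      "\<bar>G y - G x\<bar> \<le> \<eta>" for x y
    unfolding F_def G_def
    by (rule rs_integral_product_cell_estimate[OF assms(3-6)])
      (use that \<open>\<eta> \<ge> 0\<close> bounds in \<open>auto simp: F_def G_def\<close>)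
  have "xs \<noteq> []" "hd xs = a" "last xs = b" using xs by (auto simp: is_partition_def)
  moreover have "F a = 0" "G a = 0" by (simp_all add: F_def G_def)
  ultimately have "F b * G b = adj_sum (\<lambda>x y. F y * G y - F x * G x) xs"
    using adj_sum_telescope[of xs "\<lambda>u. F u * G u"] by simp
  then have "\<bar>F b * G b - adj_sum (\<lambda>x y. f x * G x * (\<alpha> y - \<alpha> x) + g x * F x * (\<beta> y - \<beta> x)) xs\<bar>
    = \<bar>adj_sum (\<lambda>x y. F y * G y - F x * G x
        - (f x * G x * (\<alpha> y - \<alpha> x) + g x * F x * (\<beta> y - \<beta> x))) xs\<bar>"
    by (simp add: adj_sum_diff)
  also have "\<dots> \<le> adj_sum (\<lambda>x y. \<eta> * ((MG + Mf) * variation \<alpha> x y + MF * variation \<beta> x y)) xs"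
    by (intro abs_adj_sum_le successively_mono[OF successively_conjI[OF
          is_partition_bounds(3)[OF xs] successively_conjI[OF osc]]]) (use cell in auto)
  also have "\<dots> = \<eta> * ((MG + Mf) * adj_sum (variation \<alpha>) xs + MF * adj_sum (variation \<beta>) xs)"
    by (simp add: adj_sum_mult_left adj_sum_add)
  also have "\<dots> \<le> \<eta> * ((MG + Mf) * variation \<alpha> a b + MF * variation \<beta> a b)"
    using adj_sum_variation_le[OF assms(5) xs] adj_sum_variation_le[OF assms(6) xs] M \<open>\<eta> \<ge> 0\<close>
    by (intro mult_left_mono add_mono) auto
  finally show ?thesis .
qed

lemma rs_integral_product_left_sum_approx:
  fixes f g \<alpha> \<beta> :: "real \<Rightarrow> real" and a :: real
  defines "F \<equiv> \<lambda>u. rs_integral f \<alpha> a u" and "G \<equiv> \<lambda>u. rs_integral g \<beta> a u"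
  assumes "a < b" "continuous_on {a..b} f" "continuous_on {a..b} g"
    and "continuous_on {a..b} \<alpha>" "bounded_variation_on \<alpha> a b"
    and "continuous_on {a..b} \<beta>" "bounded_variation_on \<beta> a b"
  shows "\<exists>K\<ge>0. \<forall>\<eta>>0. \<exists>\<delta>>0. \<forall>xs. is_partition xs a b \<and> successively (\<lambda>x y. y - x < \<delta>) xs \<longrightarrow>
      \<bar>F b * G b - adj_sum (\<lambda>x y. f x * G x * (\<alpha> y - \<alpha> x) + g x * F x * (\<beta> y - \<beta> x)) xs\<bar> \<le> \<eta> * K"
proof -
  have "continuous_on {a..b} F" "continuous_on {a..b} G"
    unfolding F_def G_def using assms by (auto intro: continuous_on_rs_integral)
  then obtain MF MG where MF: "MF \<ge> 0" "\<And>u. u \<in> {a..b} \<Longrightarrow> \<bar>F u\<bar> \<le> MF"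
    and MG: "MG \<ge> 0" "\<And>u. u \<in> {a..b} \<Longrightarrow> \<bar>G u\<bar> \<le> MG"
    by (metis continuous_on_Icc_abs_bound)
  obtain Mf where Mf: "Mf \<ge> 0" "\<And>u. u \<in> {a..b} \<Longrightarrow> \<bar>f u\<bar> \<le> Mf"
    using continuous_on_Icc_abs_bound[OF assms(4)] by metis
  define K where "K = (MG + Mf) * variation \<alpha> a b + MF * variation \<beta> a b"
  have "K \<ge> 0"
    unfolding K_def using variation_nonneg[OF assms(7)] variation_nonneg[OF assms(9)] MF MG Mf
    by simp
  moreover have "\<exists>\<delta>>0. \<forall>xs. is_partition xs a b \<and> successively (\<lambda>x y. y - x < \<delta>) xs \<longrightarrow>
      \<bar>F b * G b - adj_sum (\<lambda>x y. f x * G x * (\<alpha> y - \<alpha> x) + g x * F x * (\<beta> y - \<beta> x)) xs\<bar> \<le> \<eta> * K"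
    if "\<eta> > 0" for \<eta>
  proof -
    obtain \<delta>f where "\<delta>f > 0"
      and \<delta>f: "\<And>u w. u \<in> {a..b} \<Longrightarrow> w \<in> {a..b} \<Longrightarrow> \<bar>u - w\<bar> < \<delta>f \<Longrightarrow> \<bar>f u - f w\<bar> \<le> \<eta>"
      using continuous_on_Icc_modulus[OF assms(4) \<open>\<eta> > 0\<close>] by metis
    obtain \<delta>g where "\<delta>g > 0"
      and \<delta>g: "\<And>u w. u \<in> {a..b} \<Longrightarrow> w \<in> {a..b} \<Longrightarrow> \<bar>u - w\<bar> < \<delta>g \<Longrightarrow> \<bar>g u - g w\<bar> \<le> \<eta>"
      using continuous_on_Icc_modulus[OF assms(5) \<open>\<eta> > 0\<close>] by metis
    obtain \<delta>G where "\<delta>G > 0"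
      and \<delta>G: "\<And>u w. u \<in> {a..b} \<Longrightarrow> w \<in> {a..b} \<Longrightarrow> \<bar>u - w\<bar> < \<delta>G \<Longrightarrow> \<bar>G u - G w\<bar> \<le> \<eta>"
      using continuous_on_Icc_modulus[OF \<open>continuous_on {a..b} G\<close> \<open>\<eta> > 0\<close>] by metis
    define \<delta> where "\<delta> = min \<delta>f (min \<delta>g \<delta>G)"
    have "\<bar>F b * G b - adj_sum (\<lambda>x y. f x * G x * (\<alpha> y - \<alpha> x) + g x * F x * (\<beta> y - \<beta> x)) xs\<bar>
        \<le> \<eta> * K"
      if xs: "is_partition xs a b" "successively (\<lambda>x y. y - x < \<delta>) xs" for xs
      unfolding K_def F_def G_def
    proof (rule rs_integral_product_partition_estimate[OF assms(4,5,7,9) xs(1)])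
      have fine: "successively (\<lambda>x y. (a \<le> x \<and> x < y \<and> y \<le> b) \<and> y - x < \<delta>) xs"
        using successively_conjI[OF is_partition_bounds(3)[OF xs(1)] xs(2)] .
      show "successively (\<lambda>x y. \<forall>t\<in>{x..y}. \<bar>f t - f x\<bar> \<le> \<eta> \<and> \<bar>g t - g x\<bar> \<le> \<eta>) xs"
        by (rule successively_mono[OF fine]) (auto simp: \<delta>_def intro!: \<delta>f \<delta>g)
      show "successively (\<lambda>x y. \<bar>rs_integral g \<beta> a y - rs_integral g \<beta> a x\<bar> \<le> \<eta>) xs"
        by (rule successively_mono[OF fine]) (auto simp: \<delta>_def G_def intro!: \<delta>G[unfolded G_def])
    qed (use \<open>\<eta> > 0\<close> MF MG Mf in \<open>auto simp: F_def G_def\<close>)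
    moreover have "\<delta> > 0" using \<open>\<delta>f > 0\<close> \<open>\<delta>g > 0\<close> \<open>\<delta>G > 0\<close> by (simp add: \<delta>_def)
    ultimately show ?thesis by blast
  qed
  ultimately show ?thesis by blast
qed

lemma rs_integral_product:
  fixes f g \<alpha> \<beta> :: "real \<Rightarrow> real"
  assumes "a < b" "continuous_on {a..b} f" "continuous_on {a..b} g"
    and "continuous_on {a..b} \<alpha>" "bounded_variation_on \<alpha> a b"
    and "continuous_on {a..b} \<beta>" "bounded_variation_on \<beta> a b"
  shows "rs_integral f \<alpha> a b * rs_integral g \<beta> a b =
    rs_integral (\<lambda>u. f u * rs_integral g \<beta> a u) \<alpha> a b +
    rs_integral (\<lambda>u. g u * rs_integral f \<alpha> a u) \<beta> a b"
proof -
  define F G where "F u = rs_integral f \<alpha> a u" and "G u = rs_integral g \<beta> a u" for u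
  define I1 I2
    where "I1 = rs_integral (\<lambda>u. f u * G u) \<alpha> a b" and "I2 = rs_integral (\<lambda>u. g u * F u) \<beta> a b"
  have F: "continuous_on {a..b} F" and G: "continuous_on {a..b} G"
    unfolding F_def G_def using assms by (auto intro: continuous_on_rs_integral)
  have I1: "has_rs_integral (\<lambda>u. f u * G u) \<alpha> a b I1"
    unfolding I1_def
    by (rule has_rs_integral_rs_integral[OF assms(1) continuous_on_mult[OF assms(2) G] assms(5)])
  have I2: "has_rs_integral (\<lambda>u. g u * F u) \<beta> a b I2"
    unfolding I2_def
    by (rule has_rs_integral_rs_integral[OF assms(1) continuous_on_mult[OF assms(3) F] assms(7)])
  from rs_integral_product_left_sum_approx[OF assms, folded F_def G_def]
  obtain K where K: "K \<ge> 0" "\<And>\<eta>. \<eta> > 0 \<Longrightarrow>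
      \<exists>\<delta>>0. \<forall>xs. is_partition xs a b \<and> successively (\<lambda>x y. y - x < \<delta>) xs \<longrightarrow>
      \<bar>F b * G b - adj_sum (\<lambda>x y. f x * G x * (\<alpha> y - \<alpha> x) + g x * F x * (\<beta> y - \<beta> x)) xs\<bar> \<le> \<eta> * K"
    by blast
  have "\<bar>F b * G b - (I1 + I2)\<bar> \<le> 0 + \<epsilon>" if "\<epsilon> > 0" for \<epsilon>
  proof -
    have e: "\<epsilon> / 3 > 0" "\<epsilon> / (3 * (K + 1)) > 0" "\<epsilon> / (3 * (K + 1)) * K < \<epsilon> / 3"
      using that K(1) by (auto simp: field_simps)
    obtain \<delta> where "\<delta> > 0" and \<delta>: "\<And>xs. is_partition xs a b \<Longrightarrow> successively (\<lambda>x y. y - x < \<delta>) xs \<Longrightarrow>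
      \<bar>F b * G b - adj_sum (\<lambda>x y. f x * G x * (\<alpha> y - \<alpha> x) + g x * F x * (\<beta> y - \<beta> x)) xs\<bar>
        \<le> \<epsilon> / (3 * (K + 1)) * K"
      using K(2)[OF e(2)] by blast
    obtain \<delta>1 where "\<delta>1 > 0" and \<delta>1: "\<And>xs ts. fine_tagged_partition \<delta>1 xs ts a b \<Longrightarrow>
      \<bar>tagged_sum (\<lambda>u. f u * G u) \<alpha> xs ts - I1\<bar> < \<epsilon> / 3"
      using has_rs_integralE[OF I1 e(1)] by metis
    obtain \<delta>2 where "\<delta>2 > 0" and \<delta>2: "\<And>xs ts. fine_tagged_partition \<delta>2 xs ts a b \<Longrightarrow>
      \<bar>tagged_sum (\<lambda>u. g u * F u) \<beta> xs ts - I2\<bar> < \<epsilon> / 3"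
      using has_rs_integralE[OF I2 e(1)] by metis
    define m where "m = min \<delta> (min \<delta>1 \<delta>2)"
    have "m > 0" using \<open>\<delta> > 0\<close> \<open>\<delta>1 > 0\<close> \<open>\<delta>2 > 0\<close> by (simp add: m_def)
    then obtain xs where xs: "is_partition xs a b" "successively (\<lambda>x y. y - x < m) xs"
      using exists_fine_partition assms(1) by blast
    have "m \<le> \<delta>1" "m \<le> \<delta>2" by (simp_all add: m_def)
    then have "fine_tagged_partition \<delta>1 xs (butlast xs) a b"
      "fine_tagged_partition \<delta>2 xs (butlast xs) a b"
      using fine_tagged_partition_mono[OF fine_tagged_partition_butlast[OF xs]] by blast+
    then have "\<bar>tagged_sum (\<lambda>u. f u * G u) \<alpha> xs (butlast xs) - I1\<bar> < \<epsilon> / 3"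
      "\<bar>tagged_sum (\<lambda>u. g u * F u) \<beta> xs (butlast xs) - I2\<bar> < \<epsilon> / 3"
      using \<delta>1 \<delta>2 by blast+
    moreover have "successively (\<lambda>x y. y - x < \<delta>) xs"
      using xs(2) unfolding m_def by (auto elim: successively_mono)
    then have "\<bar>F b * G b - (tagged_sum (\<lambda>u. f u * G u) \<alpha> xs (butlast xs)
        + tagged_sum (\<lambda>u. g u * F u) \<beta> xs (butlast xs))\<bar> \<le> \<epsilon> / (3 * (K + 1)) * K"
      using \<delta>[OF xs(1)] by (simp add: tagged_sum_butlast adj_sum_add[symmetric] algebra_simps)
    ultimately show ?thesis using e(3) by linarith
  qed
  then have "\<bar>F b * G b - (I1 + I2)\<bar> \<le> 0" by (rule field_le_epsilon)
  then show ?thesis unfolding F_def G_def I1_def I2_def by simp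
qed

section \<open>Iterated integrals and the shuffle identity\<close>

fun shuffle_terms :: "'a list \<Rightarrow> 'a list \<Rightarrow> 'a list list" where
  "shuffle_terms [] ys = [ys]"
| "shuffle_terms xs [] = [xs]"
| "shuffle_terms (x # xs) (y # ys) =
     map ((#) x) (shuffle_terms xs (y # ys)) @ map ((#) y) (shuffle_terms (x # xs) ys)"

lemma set_shuffle_terms: "w \<in> set (shuffle_terms xs ys) \<Longrightarrow> set w \<subseteq> set xs \<union> set ys"
  by (induction xs ys arbitrary: w rule: shuffle_terms.induct) fastforce+

lemma bounded_variation_on_inner:
  fixes \<gamma> :: "real \<Rightarrow> 'v::euclidean_space"
  assumes "bounded_variation_on \<gamma> s t"
  shows "bounded_variation_on (\<lambda>u. \<gamma> u \<bullet> e) s t"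
proof -
  obtain B where B: "\<And>xs. is_partition xs s t \<Longrightarrow>
      (\<Sum>i<length xs - 1. norm (\<gamma> (xs ! Suc i) - \<gamma> (xs ! i))) \<le> B"
    using assms unfolding bounded_variation_on_def by blast
  have "(\<Sum>i<length xs - 1. norm (\<gamma> (xs ! Suc i) \<bullet> e - \<gamma> (xs ! i) \<bullet> e)) \<le> B * norm e"
    if "is_partition xs s t" for xs
  proof -
    have "(\<Sum>i<length xs - 1. norm (\<gamma> (xs ! Suc i) \<bullet> e - \<gamma> (xs ! i) \<bullet> e))
        \<le> (\<Sum>i<length xs - 1. norm (\<gamma> (xs ! Suc i) - \<gamma> (xs ! i)) * norm e)"
      by (intro sum_mono) (simp add: inner_diff_left[symmetric] Cauchy_Schwarz_ineq2)
    also have "\<dots> \<le> B * norm e"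
      using B[OF that] by (simp add: sum_distrib_right[symmetric] mult_right_mono)
    finally show ?thesis .
  qed
  then show ?thesis unfolding bounded_variation_on_def by blast
qed

context
  fixes \<gamma> :: "real \<Rightarrow> 'v::euclidean_space" and s t :: real
  assumes st: "s < t" and continuous: "continuous_on {s..t} \<gamma>"
    and bounded_variation: "bounded_variation_on \<gamma> s t"
begin

lemma continuous_on_iter_int: "continuous_on {s..t} (iter_int \<gamma> s w)"
proof (induction w)
  case (Cons e w)
  have "continuous_on {s..t} (\<lambda>u. rs_integral (iter_int \<gamma> s w) (\<lambda>v. \<gamma> v \<bullet> e) s u)"
    using Cons.IH continuous bounded_variation_on_inner[OF bounded_variation]
    by (intro continuous_on_rs_integral continuous_on_inner continuous_on_const)
  then show ?case by simp
qed simp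

text \<open>The head of the word is the outermost integration in \<open>iter_int\<close>, so the product
  rule splits the shuffles of \<open>x # xs\<close> and \<open>y # ys\<close> according to which head comes first.\<close>

lemma iter_int_shuffle:
  "u \<in> {s..t} \<Longrightarrow> iter_int \<gamma> s p u * iter_int \<gamma> s q u = (\<Sum>w\<leftarrow>shuffle_terms p q. iter_int \<gamma> s w u)"
proof (induction p q arbitrary: u rule: shuffle_terms.induct)
  case (3 x xs y ys)
  show ?case
  proof (cases "u = s")
    case False
    with "3.prems" have u: "s < u" "u \<le> t" by auto
    define \<alpha> \<beta> where "\<alpha> = (\<lambda>v. \<gamma> v \<bullet> x)" and "\<beta> = (\<lambda>v. \<gamma> v \<bullet> y)"
    have cont: "continuous_on {s..u} \<alpha>" "continuous_on {s..u} \<beta>"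
      "\<And>w. continuous_on {s..u} (iter_int \<gamma> s w)"
      unfolding \<alpha>_def \<beta>_def using u
      by (auto intro!: continuous_on_inner continuous_on_subset[OF continuous]
          continuous_on_subset[OF continuous_on_iter_int])
    have bv: "bounded_variation_on \<alpha> s u" "bounded_variation_on \<beta> s u"
      unfolding \<alpha>_def \<beta>_def using u
      by (auto intro!:
          bounded_variation_on_subinterval[OF bounded_variation_on_inner[OF bounded_variation]])
    have "iter_int \<gamma> s (x # xs) u * iter_int \<gamma> s (y # ys) u
      = rs_integral (\<lambda>v. iter_int \<gamma> s xs v * iter_int \<gamma> s (y # ys) v) \<alpha> s u
        + rs_integral (\<lambda>v. iter_int \<gamma> s ys v * iter_int \<gamma> s (x # xs) v) \<beta> s u"
      using rs_integral_product[OF u(1) cont(3,3,1) bv(1) cont(2) bv(2)]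
      by (simp add: \<alpha>_def \<beta>_def)
    also have "\<dots> = rs_integral (\<lambda>v. \<Sum>w\<leftarrow>shuffle_terms xs (y # ys). iter_int \<gamma> s w v) \<alpha> s u
        + rs_integral (\<lambda>v. \<Sum>w\<leftarrow>shuffle_terms (x # xs) ys. iter_int \<gamma> s w v) \<beta> s u"
      using "3.IH" u
      by (intro arg_cong2[where f = "(+)"] rs_integral_cong) (auto simp: mult.commute)
    also have "\<dots> = (\<Sum>w\<leftarrow>shuffle_terms xs (y # ys). rs_integral (iter_int \<gamma> s w) \<alpha> s u)
        + (\<Sum>w\<leftarrow>shuffle_terms (x # xs) ys. rs_integral (iter_int \<gamma> s w) \<beta> s u)"
      by (simp only: rs_integral_sum_list[OF u(1) bv(1) cont(3)]
          rs_integral_sum_list[OF u(1) bv(2) cont(3)])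
    also have "\<dots> = (\<Sum>w\<leftarrow>shuffle_terms (x # xs) (y # ys). iter_int \<gamma> s w u)"
      by (simp add: \<alpha>_def \<beta>_def o_def)
    finally show ?thesis .
  qed (simp add: o_def)
qed simp_all

lemma signature_mult:
  assumes "u \<in> lists Basis" "v \<in> lists Basis"
  shows "signature \<gamma> s t u * signature \<gamma> s t v =
    (\<Sum>w\<leftarrow>map rev (shuffle_terms (rev u) (rev v)). signature \<gamma> s t w)"
proof -
  have "signature \<gamma> s t (rev w) = iter_int \<gamma> s w t"
    if "w \<in> set (shuffle_terms (rev u) (rev v))" for w
    using set_shuffle_terms[OF that] assms by (auto simp: signature_def)
  then show ?thesis
    using assms iter_int_shuffle[of t "rev u" "rev v"] st
    by (simp add: signature_def o_def cong: map_cong)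
qed

end

section \<open>Linear independence of characters\<close>

lemma sum_mult_sum_list_commute:
  "(\<Sum>x\<in>X. c x * (\<Sum>k\<leftarrow>ks. x k)) = (\<Sum>k\<leftarrow>ks. \<Sum>x\<in>X. c x * (x k :: real))"
  by (induction ks) (simp_all add: sum.distrib ring_distribs)

text \<open>Characters of an algebra with basis indexed by \<open>L\<close>, in which the product of the basis
  elements \<open>u\<close> and \<open>v\<close> is the sum of the basis elements listed in \<open>K u v\<close>.\<close>

lemma character_relation_mult:
  fixes X :: "('w \<Rightarrow> real) set"
  assumes support: "\<And>x w. x \<in> X \<Longrightarrow> w \<notin> L \<Longrightarrow> x w = 0"
    and mult: "\<And>x u v. x \<in> X \<Longrightarrow> u \<in> L \<Longrightarrow> v \<in> L \<Longrightarrow> x u * x v = (\<Sum>k\<leftarrow>K u v. x k)"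
    and "w \<in> L" and relation: "\<And>v. (\<Sum>x\<in>X. c x * x v) = 0"
  shows "(\<Sum>x\<in>X. c x * x w * x v) = 0"
proof (cases "v \<in> L")
  case True
  have "(\<Sum>x\<in>X. c x * x w * x v) = (\<Sum>x\<in>X. c x * (\<Sum>k\<leftarrow>K w v. x k))"
    using mult[OF _ \<open>w \<in> L\<close> True] by (simp add: mult.assoc)
  also have "\<dots> = 0"
    unfolding sum_mult_sum_list_commute using relation by simp
  finally show ?thesis .
next
  case False
  have "c x * x w * x v = 0" if "x \<in> X" for x using support[OF that False] by simp
  then show ?thesis by (simp add: sum.neutral)
qed

lemma characters_linearly_independent:
  fixes X :: "('w \<Rightarrow> real) set"
  assumes "finite X"
    and "\<And>x. x \<in> X \<Longrightarrow> x e = 1"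
    and "\<And>x w. x \<in> X \<Longrightarrow> w \<notin> L \<Longrightarrow> x w = 0"
    and "\<And>x u v. x \<in> X \<Longrightarrow> u \<in> L \<Longrightarrow> v \<in> L \<Longrightarrow> x u * x v = (\<Sum>k\<leftarrow>K u v. x k)"
    and "\<And>w. (\<Sum>x\<in>X. c x * x w) = 0"
  shows "\<forall>x\<in>X. c x = 0"
  using assms
proof (induction X arbitrary: c rule: finite_psubset_induct)
  case (psubset X)
  note one = psubset.prems(1) and support = psubset.prems(2) and mult = psubset.prems(3)
    and relation = psubset.prems(4)
  show ?case
  proof (rule ccontr)
    assume "\<not> (\<forall>x\<in>X. c x = 0)"
    then obtain x0 where x0: "x0 \<in> X" "c x0 \<noteq> 0" by blast
    show False
    proof (cases "X = {x0}")
      case True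
      have "x0 e = 1" using one x0(1) by blast
      with relation[of e] x0(2) True show False by simp
    next
      case False
      then obtain y where y: "y \<in> X" "y \<noteq> x0" using x0 by blast
      have "\<exists>w. x0 w \<noteq> y w" using y(2) by (metis fun_eq_iff)
      then obtain w where w: "x0 w \<noteq> y w" ..
      have "w \<in> L"
      proof (rule ccontr)
        assume "w \<notin> L"
        with support[OF x0(1)] support[OF y(1)] w show False by simp
      qed
      define c' where "c' x = c x * (x w - y w)" for x
      have "(\<Sum>x\<in>X. c' x * x v) = (\<Sum>x\<in>X. c x * x w * x v) - y w * (\<Sum>x\<in>X. c x * x v)" for v
        unfolding c'_def sum_distrib_left sum_subtractf[symmetric]
        by (rule sum.cong) (auto simp: algebra_simps)
      moreover have "(\<Sum>x\<in>X. c x * x w * x v) = 0" for v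
        using support mult \<open>w \<in> L\<close> relation by (rule character_relation_mult)
      ultimately have "(\<Sum>x\<in>X. c' x * x v) = 0" for v
        using relation by simp
      moreover have "(\<Sum>x\<in>X. c' x * x v) = c' y * y v + (\<Sum>x\<in>X - {y}. c' x * x v)" for v
        using psubset.hyps(1) y(1) by (rule sum.remove)
      moreover have "c' y = 0" by (simp add: c'_def)
      ultimately have "(\<Sum>x\<in>X - {y}. c' x * x v) = 0" for v by simp
      then have "\<forall>x\<in>X - {y}. c' x = 0"
        by (intro psubset.IH[of "X - {y}" c']) (use y(1) one support mult in auto)
      then have "c' x0 = 0" using x0(1) y(2) by blast
      with x0(2) w show False by (simp add: c'_def)
    qed
  qed
qed

theorem mainTheorem16:
  fixes X :: "('v::euclidean_space list \<Rightarrow> real) set"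
    and c :: "('v list \<Rightarrow> real) \<Rightarrow> real"
  assumes "finite X"
    and "X \<subseteq> signatures"
    and "\<And>w. (\<Sum>x\<in>X. c x * x w) = 0"
  shows "\<forall>x\<in>X. c x = 0"
proof (rule characters_linearly_independent[OF assms(1) _ _ _ assms(3)])
  fix x assume "x \<in> X"
  then obtain \<gamma> s t where x: "x = signature \<gamma> s t"
    and \<gamma>: "s < t" "continuous_on {s..t} \<gamma>" "bounded_variation_on \<gamma> s t"
    using assms(2) unfolding signatures_def by blast
  show "x [] = 1" unfolding x by (simp add: signature_def)
  show "\<And>w. w \<notin> lists Basis \<Longrightarrow> x w = 0" unfolding x by (simp add: signature_def)
  show "\<And>u v. u \<in> lists Basis \<Longrightarrow> v \<in> lists Basis \<Longrightarrow>
      x u * x v = (\<Sum>w\<leftarrow>map rev (shuffle_terms (rev u) (rev v)). x w)"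
    unfolding x by (rule signature_mult[OF \<gamma>])
qed

end
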